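(* Let $\alpha\in(0,\pi/2]$ and let $(L,\theta)$, $\theta\in\mathcal{M}_{\alpha,L}$, be a minimizer of problem $(\mathcal{P}_\alpha)$. Let $x(s)=\int_0^s\cos\theta(u)\,du$ and $y(s)=-1+\int_0^s\sin\theta(u)\,du$. Then $\theta\in W^{2,\infty}(0,L)$ and there exist real constants $\lambda_1,\lambda_2,C$ such that $$\theta'(s)=\big(C-\lambda_1(y(s)+1)-\lambda_2x(s)\big)^-\qquad\text{for all }s\in[0,L),$$ where $t^-=\max(-t,0)$ denotes the negative part of a real number $t$.
   Context: For $\alpha\in(0,\pi/2]$ and $L>0$, let $\mathcal{M}_{\alpha,L}$ be the set of $\theta\in H^1(0,L)$ with $\theta'\ge 0$ a.e., $\theta(0)=0$, $\theta(L)=2\alpha$, $\int_0^L\cos\theta(u)\,du=\sin2\alpha$ and $\int_0^L\sin\theta(u)\,du=1-\cos2\alpha$ ($\theta$ is the tangent angle of a convex arc parametrized by arc length from $(0,-1)$ to $(\sin2\alpha,-\cos2\alpha)$). Problem $(\mathcal{P}_\alpha)$ is to minimize $\frac12\int_0^L\theta'(s)^2\,ds$ over all $L>0$ and $\theta\in\mathcal{M}_{\alpha,L}$. *)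

theory Defs
  imports "HOL-Analysis.Analysis"
begin

text \<open>H^1(0,L) membership with weak derivative g: g is in L^2(0,L) (hence in L^1(0,L))
  and theta is the (absolutely continuous) primitive of g on [0,L].\<close>
definition H1_with_deriv :: "real \<Rightarrow> (real \<Rightarrow> real) \<Rightarrow> (real \<Rightarrow> real) \<Rightarrow> bool" where
  "H1_with_deriv L \<theta> g \<longleftrightarrow>
     g \<in> borel_measurable lborel \<and>
     set_integrable lborel {0..L} g \<and>
     set_integrable lborel {0..L} (\<lambda>s. (g s)\<^sup>2) \<and>
     (\<forall>s\<in>{0..L}. \<theta> s = \<theta> 0 + (LINT u:{0..s}|lborel. g u))"

definition admissible :: "real \<Rightarrow> real \<Rightarrow> (real \<Rightarrow> real) \<Rightarrow> (real \<Rightarrow> real) \<Rightarrow> bool" where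
  "admissible \<alpha> L \<theta> g \<longleftrightarrow>
     H1_with_deriv L \<theta> g \<and>
     (AE s in lborel. s \<in> {0..L} \<longrightarrow> g s \<ge> 0) \<and>
     \<theta> 0 = 0 \<and> \<theta> L = 2 * \<alpha> \<and>
     (LINT u:{0..L}|lborel. cos (\<theta> u)) = sin (2 * \<alpha>) \<and>
     (LINT u:{0..L}|lborel. sin (\<theta> u)) = 1 - cos (2 * \<alpha>)"

definition energy :: "real \<Rightarrow> (real \<Rightarrow> real) \<Rightarrow> real" where
  "energy L g = (1/2) * (LINT s:{0..L}|lborel. (g s)\<^sup>2)"

definition is_minimizer :: "real \<Rightarrow> real \<Rightarrow> (real \<Rightarrow> real) \<Rightarrow> (real \<Rightarrow> real) \<Rightarrow> bool" where
  "is_minimizer \<alpha> L \<theta> g \<longleftrightarrow>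
     L > 0 \<and> admissible \<alpha> L \<theta> g \<and>
     (\<forall>L' \<theta>' g'. L' > 0 \<longrightarrow> admissible \<alpha> L' \<theta>' g' \<longrightarrow> energy L g \<le> energy L' g')"

definition neg_part :: "real \<Rightarrow> real" where
  "neg_part t = max (- t) 0"

end

theory Submission
  imports Defs
begin

text \<open>
  Fix the length \<open>L\<close> of a minimizer.  Then \<open>g = \<theta>'\<close> minimizes \<open>\<integral>g\<^sup>2\<close> among nonnegative
  \<open>L\<^sup>2\<close> functions subject to three scalar constraints, the turning angle and the two coordinates of
  the endpoint of the arc.  The constraint map is differentiable with a remainder that is quadratic
  in the \<open>L\<^sup>1\<close> norm, and its derivative is already onto \<open>\<real>\<^sup>3\<close> on the variations
  \<open>g \<cdot> \<one>\<^bsub>[a,b]\<^esub>\<close>: otherwise the angle would be locally constant around an angle where it must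
  increase.  Fixing three such variations, Brouwer's theorem corrects every perturbation \<open>\<tau> d\<close>
  with \<open>g + d \<ge> 0\<close> back onto the constraint at cost \<open>O(\<tau>)\<close>, which yields a Lagrange multiplier
  \<open>\<lambda>\<close> with \<open>\<lambda> \<bullet> DG(g) d \<le> \<integral>g d\<close>.  By Fubini \<open>\<lambda> \<bullet> DG(g) d = \<integral>d p\<close> for an explicit
  Lipschitz function \<open>p\<close>, affine in the coordinates of the arc, and testing with \<open>d = p\<^sup>+ - g\<close>
  gives \<open>g = p\<^sup>+\<close> almost everywhere.
\<close>

section \<open>Primitives of integrable functions\<close>

definition primitive :: "(real \<Rightarrow> real) \<Rightarrow> real \<Rightarrow> real" where
  "primitive f s = (LINT u:{0..s}|lborel. f u)"

definition L1_norm :: "real \<Rightarrow> (real \<Rightarrow> real) \<Rightarrow> real" where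
  "L1_norm L f = (LINT s:{0..L}|lborel. \<bar>f s\<bar>)"

lemma set_integrable_subinterval:
  fixes f :: "real \<Rightarrow> real"
  assumes "set_integrable lborel {0..L} f" "0 \<le> a" "b \<le> L"
  shows "set_integrable lborel {a..b} f"
  by (rule set_integrable_subset[OF assms(1)]) (use assms in auto)

lemma set_integral_eq_integral_subinterval:
  fixes f :: "real \<Rightarrow> real"
  assumes "set_integrable lborel {0..L} f" "0 \<le> a" "b \<le> L"
  shows "f integrable_on {a..b}" "(LINT u:{a..b}|lborel. f u) = integral {a..b} f"
  using set_borel_integral_eq_integral set_integrable_subinterval[OF assms] by auto

lemma primitive_eq_integral:
  assumes "set_integrable lborel {0..L} f" "0 \<le> s" "s \<le> L"
  shows "primitive f s = integral {0..s} f"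
  unfolding primitive_def using set_integral_eq_integral_subinterval[OF assms(1) order_refl assms(3)] by simp

lemma primitive_zero [simp]: "primitive f 0 = 0"
  unfolding primitive_def set_lebesgue_integral_def
  by (rule integral_eq_zero_AE) (use AE_lborel_singleton[of 0] in \<open>eventually_elim, auto simp: indicator_def\<close>)

lemma primitive_cmult: "primitive (\<lambda>s. c * f s) u = c * primitive f u"
  unfolding primitive_def by simp

lemma primitive_add:
  assumes "set_integrable lborel {0..L} f" "set_integrable lborel {0..L} h" "0 \<le> u" "u \<le> L"
  shows "primitive (\<lambda>s. f s + h s) u = primitive f u + primitive h u"
  unfolding primitive_def
  using set_integrable_subinterval[OF assms(1) order_refl assms(4)]
    set_integrable_subinterval[OF assms(2) order_refl assms(4)]
  by (rule set_integral_add)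

lemma primitive_diff:
  assumes f: "set_integrable lborel {0..L} f" and "0 \<le> a" "a \<le> b" "b \<le> L"
  shows "primitive f b - primitive f a = (LINT u:{a..b}|lborel. f u)"
proof -
  have "f integrable_on {0..L}" using set_integral_eq_integral_subinterval[OF f order_refl order_refl] by simp
  then have "integral {0..a} f + integral {a..b} f = integral {0..b} f"
    using assms integrable_on_subinterval[of f "{0..L}" 0 b] by (intro Henstock_Kurzweil_Integration.integral_combine) auto
  then show ?thesis
    using primitive_eq_integral[OF f] set_integral_eq_integral_subinterval[OF f, of a b] assms by auto
qed

lemma primitive_cong_AE:
  assumes "f \<in> borel_measurable borel" "h \<in> borel_measurable borel"
    and "AE s in lborel. s \<in> {0..L} \<longrightarrow> f s = h s" and "t \<le> L"
  shows "primitive f t = primitive h t"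
  unfolding primitive_def
  by (rule set_lebesgue_integral_cong_AE) (use assms in \<open>auto elim!: AE_mp\<close>)

lemma continuous_on_primitive:
  assumes f: "set_integrable lborel {0..L} f"
  shows "continuous_on {0..L} (primitive f)"
proof -
  have "continuous_on {0..L} (\<lambda>x. integral {0..x} f)"
    using set_integral_eq_integral_subinterval[OF f order_refl order_refl]
    by (intro indefinite_integral_continuous_1) auto
  then show ?thesis by (rule continuous_on_eq) (use primitive_eq_integral[OF f] in auto)
qed

lemma has_real_derivative_primitive:
  assumes "continuous_on {0..L} f" "s \<in> {0..L}"
  shows "(primitive f has_real_derivative f s) (at s within {0..L})"
proof -
  have "((\<lambda>x. integral {0..x} f) has_real_derivative f s) (at s within {0..L})"
    by (rule integral_has_real_derivative) (use assms in auto)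
  then show ?thesis
    by (rule has_field_derivative_transform_within[where d=1])
       (use primitive_eq_integral[OF borel_integrable_atLeastAtMost'[OF assms(1)]] assms in auto)
qed

lemma abs_set_integral_le:
  fixes q :: "real \<Rightarrow> real"
  assumes "set_integrable lborel {a..b} q" "\<And>s. s \<in> {a..b} \<Longrightarrow> \<bar>q s\<bar> \<le> c" "a \<le> b"
  shows "\<bar>LINT s:{a..b}|lborel. q s\<bar> \<le> c * (b - a)"
proof -
  have "\<bar>LINT s:{a..b}|lborel. q s\<bar> \<le> (LINT s:{a..b}|lborel. \<bar>q s\<bar>)"
    using set_integral_norm_bound[OF assms(1)] by simp
  also have "\<dots> \<le> (LINT s:{a..b}|lborel. c)"
    using assms by (intro set_integral_mono set_integrable_abs) (auto simp: set_integrable_def)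
  also have "\<dots> = c * (b - a)" using assms(3) by (simp add: set_integral_const)
  finally show ?thesis .
qed

lemma abs_primitive_le_L1_norm:
  assumes f: "set_integrable lborel {0..L} f" and "0 \<le> u" "u \<le> L"
  shows "\<bar>primitive f u\<bar> \<le> L1_norm L f"
proof -
  have "\<bar>primitive f u\<bar> \<le> (LINT s:{0..u}|lborel. \<bar>f s\<bar>)"
    unfolding primitive_def using set_integral_norm_bound[OF set_integrable_subinterval[OF f order_refl assms(3)]]
    by simp
  also have "\<dots> \<le> L1_norm L f"
    unfolding L1_norm_def set_lebesgue_integral_def
    using set_integrable_abs[OF f] set_integrable_abs[OF set_integrable_subinterval[OF f order_refl assms(3)]] assms
    by (intro integral_mono) (auto simp: set_integrable_def indicator_def)
  finally show ?thesis .
qed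

lemma L1_norm_nonneg: "0 \<le> L1_norm L f"
  unfolding L1_norm_def set_lebesgue_integral_def by (rule integral_nonneg_AE) auto

lemma L1_norm_add:
  assumes "set_integrable lborel {0..L} f" "set_integrable lborel {0..L} h"
  shows "L1_norm L (\<lambda>s. f s + h s) \<le> L1_norm L f + L1_norm L h"
proof -
  have "L1_norm L (\<lambda>s. f s + h s) \<le> (LINT s:{0..L}|lborel. \<bar>f s\<bar> + \<bar>h s\<bar>)"
    unfolding L1_norm_def
    by (rule set_integral_mono) (use assms in \<open>auto intro!: set_integrable_abs set_integral_add\<close>)
  also have "\<dots> = L1_norm L f + L1_norm L h"
    unfolding L1_norm_def using set_integrable_abs[OF assms(1)] set_integrable_abs[OF assms(2)] by simp
  finally show ?thesis .
qed

lemma L1_norm_cmult: "L1_norm L (\<lambda>s. c * f s) = \<bar>c\<bar> * L1_norm L f"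
  unfolding L1_norm_def by (simp add: abs_mult)

definition sq_integrable :: "real \<Rightarrow> (real \<Rightarrow> real) \<Rightarrow> bool" where
  "sq_integrable L f \<longleftrightarrow> f \<in> borel_measurable borel \<and> set_integrable lborel {0..L} (\<lambda>s. (f s)\<^sup>2)"

lemma sq_integrable_measurable: "sq_integrable L f \<Longrightarrow> f \<in> borel_measurable borel"
  by (simp add: sq_integrable_def)

lemma sq_integrable_square: "sq_integrable L f \<Longrightarrow> set_integrable lborel {0..L} (\<lambda>s. (f s)\<^sup>2)"
  by (simp add: sq_integrable_def)

lemma set_integrable_dominated:
  fixes f h :: "real \<Rightarrow> real"
  assumes "set_integrable lborel {0..L} h" "f \<in> borel_measurable borel"
    and "\<And>s. s \<in> {0..L} \<Longrightarrow> \<bar>f s\<bar> \<le> h s"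
  shows "set_integrable lborel {0..L} f"
  by (rule set_integrable_bound[OF assms(1)])
     (use assms in \<open>auto simp: set_borel_measurable_def intro!: AE_I2 intro: order_trans[OF _ abs_ge_self]\<close>)

lemma sq_integrable_imp_set_integrable:
  assumes "sq_integrable L f"
  shows "set_integrable lborel {0..L} f"
proof (rule set_integrable_dominated[where h="\<lambda>s. 1 + (f s)\<^sup>2"])
  show "set_integrable lborel {0..L} (\<lambda>s. 1 + (f s)\<^sup>2)"
    using assms borel_integrable_atLeastAtMost'[of 0 L "\<lambda>_. 1::real"]
    by (intro set_integral_add) (auto simp: sq_integrable_def)
  show "\<bar>f s\<bar> \<le> 1 + (f s)\<^sup>2" for s
    using zero_le_power2[of "\<bar>f s\<bar> - 1"] by (simp add: power2_eq_square algebra_simps)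
qed (use assms in \<open>simp add: sq_integrable_def\<close>)

lemma sq_integrable_imp_set_integrable_mult:
  assumes "sq_integrable L f" "sq_integrable L h"
  shows "set_integrable lborel {0..L} (\<lambda>s. f s * h s)"
proof (rule set_integrable_dominated[where h="\<lambda>s. (f s)\<^sup>2 + (h s)\<^sup>2"])
  show "\<bar>f s * h s\<bar> \<le> (f s)\<^sup>2 + (h s)\<^sup>2" for s
  proof -
    have "2 * (\<bar>f s\<bar> * \<bar>h s\<bar>) \<le> (f s)\<^sup>2 + (h s)\<^sup>2"
      using zero_le_power2[of "\<bar>f s\<bar> - \<bar>h s\<bar>"] by (simp add: power2_eq_square algebra_simps)
    moreover have "0 \<le> \<bar>f s\<bar> * \<bar>h s\<bar>" by simp
    ultimately show ?thesis by (simp only: abs_mult)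
  qed
qed (use assms in \<open>auto simp: sq_integrable_def\<close>)

lemma sq_integrable_add:
  assumes "sq_integrable L f" "sq_integrable L h"
  shows "sq_integrable L (\<lambda>s. f s + h s)"
  unfolding sq_integrable_def
proof
  show "set_integrable lborel {0..L} (\<lambda>s. (f s + h s)\<^sup>2)"
  proof (rule set_integrable_dominated[where h="\<lambda>s. 2 * (f s)\<^sup>2 + 2 * (h s)\<^sup>2"])
    show "\<bar>(f s + h s)\<^sup>2\<bar> \<le> 2 * (f s)\<^sup>2 + 2 * (h s)\<^sup>2" for s
      using zero_le_power2[of "f s - h s"] by (simp only: abs_power2) (simp add: power2_eq_square algebra_simps)
  qed (use assms in \<open>auto simp: sq_integrable_def\<close>)
qed (use assms in \<open>auto simp: sq_integrable_def intro!: borel_measurable_add\<close>)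

lemma sq_integrable_cmult: "sq_integrable L f \<Longrightarrow> sq_integrable L (\<lambda>s. c * f s)"
  unfolding sq_integrable_def by (auto simp: power_mult_distrib)

lemma sq_integrable_diff: "sq_integrable L f \<Longrightarrow> sq_integrable L h \<Longrightarrow> sq_integrable L (\<lambda>s. f s - h s)"
  using sq_integrable_add[of L f "\<lambda>s. - 1 * h s"] sq_integrable_cmult[of L h "- 1"] by simp

lemma sq_integrable_mult_indicator:
  assumes "sq_integrable L f"
  shows "sq_integrable L (\<lambda>s. f s * indicator {a..b} s)"
  unfolding sq_integrable_def
proof
  show "set_integrable lborel {0..L} (\<lambda>s. (f s * indicator {a..b} s)\<^sup>2)"
    by (rule set_integrable_dominated[where h="\<lambda>s. (f s)\<^sup>2"])
       (use assms in \<open>auto simp: sq_integrable_def indicator_def\<close>)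
qed (use assms in \<open>auto simp: sq_integrable_def intro!: borel_measurable_times\<close>)

lemma sq_integrable_continuous:
  assumes "continuous_on {0..L} q"
  shows "sq_integrable L (\<lambda>s. indicator {0..L} s * q s)"
  unfolding sq_integrable_def
proof
  show "(\<lambda>s. indicator {0..L} s * q s) \<in> borel_measurable borel"
    using borel_measurable_continuous_on_indicator[OF _ assms] by simp
  have "set_integrable lborel {0..L} (\<lambda>s. (q s)\<^sup>2)"
    using assms by (intro borel_integrable_atLeastAtMost' continuous_intros)
  then show "set_integrable lborel {0..L} (\<lambda>s. (indicator {0..L} s * q s)\<^sup>2)"
    by (rule set_integrable_cong[THEN iffD1, rotated -1]) auto
qed

lemma set_integrable_mult_continuous:
  assumes "sq_integrable L f" "continuous_on {0..L} q"
  shows "set_integrable lborel {0..L} (\<lambda>s. f s * q s)"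
  using sq_integrable_imp_set_integrable_mult[OF assms(1) sq_integrable_continuous[OF assms(2)]]
  by (rule set_integrable_cong[THEN iffD1, rotated -1]) auto

lemma set_integral_square_nonneg: "0 \<le> (LINT s:{0..L}|lborel. (f s)\<^sup>2)"
  for f :: "real \<Rightarrow> real"
  unfolding set_lebesgue_integral_def by (rule integral_nonneg_AE) auto

lemma set_integral_square_add:
  assumes "sq_integrable L f" "sq_integrable L h"
  shows "(LINT s:{0..L}|lborel. (f s + h s)\<^sup>2)
    = (LINT s:{0..L}|lborel. (f s)\<^sup>2) + 2 * (LINT s:{0..L}|lborel. f s * h s) + (LINT s:{0..L}|lborel. (h s)\<^sup>2)"
proof -
  have "(LINT s:{0..L}|lborel. (f s + h s)\<^sup>2) = (LINT s:{0..L}|lborel. (f s)\<^sup>2 + 2 * (f s * h s) + (h s)\<^sup>2)"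
    by (rule set_lebesgue_integral_cong) (auto simp: power2_eq_square algebra_simps)
  then show ?thesis
    using assms sq_integrable_imp_set_integrable_mult[OF assms] by (simp add: sq_integrable_def)
qed

section \<open>Exchanging the order of integration\<close>

lemma integrable_triangle_kernel:
  fixes \<phi> H :: "real \<Rightarrow> real"
  assumes [measurable]: "\<phi> \<in> borel_measurable borel" "H \<in> borel_measurable borel"
    and \<phi>: "set_integrable lborel {0..L} \<phi>" and H: "\<And>u. \<bar>H u\<bar> \<le> B" and "0 \<le> L"
  shows "integrable (lborel \<Otimes>\<^sub>M lborel)
    (\<lambda>(t, u). indicator {0..L} t * \<phi> t * (of_bool (t \<le> u \<and> u \<le> L) * H u))"
    (is "integrable _ (case_prod ?F)")
proof (rule lborel_pair.Fubini_integrable)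
  have B: "0 \<le> B" using H[of 0] by simp
  have bound: "integrable lborel (\<lambda>u. B * indicator {t..L} u)" for t
    by (intro integrable_mult_right integrable_real_indicator) (auto simp: emeasure_lborel_Icc_eq)
  have inner: "integrable lborel (\<lambda>u. of_bool (t \<le> u \<and> u \<le> L) * H u)" for t
    by (rule Bochner_Integration.integrable_bound[OF bound[of t]]) (use H B in \<open>auto simp: indicator_def\<close>)
  show "case_prod ?F \<in> borel_measurable (lborel \<Otimes>\<^sub>M lborel)" by measurable
  show "AE t in lborel. integrable lborel (\<lambda>u. case_prod ?F (t, u))"
    using inner by auto
  have inner_le: "(\<integral>u. of_bool (t \<le> u \<and> u \<le> L) * \<bar>H u\<bar> \<partial>lborel) \<le> B * L" if "0 \<le> t" for t
  proof -
    have "(\<integral>u. of_bool (t \<le> u \<and> u \<le> L) * \<bar>H u\<bar> \<partial>lborel) \<le> (\<integral>u. B * indicator {t..L} u \<partial>lborel)"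
      using integrable_abs[OF inner[of t]] bound[of t] H by (intro integral_mono) (auto simp: abs_mult indicator_def)
    also have "\<dots> = B * measure lborel {t..L}" by simp
    also have "\<dots> \<le> B * L" using B that \<open>0 \<le> L\<close> by (auto intro: mult_left_mono)
    finally show ?thesis .
  qed
  show "integrable lborel (\<lambda>t. \<integral>u. norm (case_prod ?F (t, u)) \<partial>lborel)"
  proof (rule Bochner_Integration.integrable_bound)
    show "integrable lborel (\<lambda>t. B * L * (indicator {0..L} t * \<phi> t))"
      using \<phi> by (simp add: set_integrable_def)
    show "AE t in lborel. norm (\<integral>u. norm (case_prod ?F (t, u)) \<partial>lborel) \<le> norm (B * L * (indicator {0..L} t * \<phi> t))"
    proof (rule AE_I2)
      fix t
      define I where "I = (\<integral>u. of_bool (t \<le> u \<and> u \<le> L) * \<bar>H u\<bar> \<partial>lborel)"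
      have "(\<integral>u. norm (case_prod ?F (t, u)) \<partial>lborel) = indicator {0..L} t * \<bar>\<phi> t\<bar> * I"
        by (simp add: I_def abs_mult)
      moreover have "0 \<le> I" unfolding I_def by (rule integral_nonneg_AE) auto
      moreover have "indicator {0..L} t * \<bar>\<phi> t\<bar> * I \<le> indicator {0..L} t * \<bar>\<phi> t\<bar> * (B * L)"
        using inner_le[of t] by (cases "t \<in> {0..L}") (auto simp: I_def intro!: mult_left_mono)
      ultimately show "norm (\<integral>u. norm (case_prod ?F (t, u)) \<partial>lborel) \<le> norm (B * L * (indicator {0..L} t * \<phi> t))"
        using B \<open>0 \<le> L\<close> by (simp add: abs_mult mult_ac)
    qed
  qed measurable
qed

lemma set_integral_mult_primitive:
  fixes \<phi> H :: "real \<Rightarrow> real"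
  assumes [measurable]: "\<phi> \<in> borel_measurable borel" "H \<in> borel_measurable borel"
    and \<phi>: "set_integrable lborel {0..L} \<phi>" and H: "\<And>u. \<bar>H u\<bar> \<le> B" and "0 \<le> L"
  shows "(LINT u:{0..L}|lborel. H u * primitive \<phi> u) = (LINT t:{0..L}|lborel. \<phi> t * (LINT u:{t..L}|lborel. H u))"
proof -
  define F where "F t u = indicator {0..L} t * \<phi> t * (of_bool (t \<le> u \<and> u \<le> L) * H u)" for t u :: real
  have "(\<integral>u. (\<integral>t. F t u \<partial>lborel) \<partial>lborel) = (\<integral>t. (\<integral>u. F t u \<partial>lborel) \<partial>lborel)"
    unfolding F_def by (rule lborel_pair.Fubini_integral[OF integrable_triangle_kernel[OF assms]])
  moreover have "(\<integral>t. F t u \<partial>lborel) = indicator {0..L} u * (H u * primitive \<phi> u)" for u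
  proof -
    have "(\<lambda>t. F t u) = (\<lambda>t. (indicator {0..L} u * H u) * (indicator {0..u} t * \<phi> t))"
      by (auto simp: F_def indicator_def)
    then show ?thesis by (simp add: primitive_def set_lebesgue_integral_def)
  qed
  moreover have "(\<integral>u. F t u \<partial>lborel) = indicator {0..L} t * (\<phi> t * (LINT u:{t..L}|lborel. H u))" for t
  proof -
    have "(\<lambda>u. F t u) = (\<lambda>u. (indicator {0..L} t * \<phi> t) * (indicator {t..L} u * H u))"
      by (auto simp: F_def indicator_def)
    then show ?thesis by (simp add: set_lebesgue_integral_def)
  qed
  ultimately show ?thesis by (simp add: set_lebesgue_integral_def)
qed

lemma abs_sin_sub_le: "\<bar>sin b - b\<bar> \<le> b\<^sup>2 / 2"
  for b :: real
proof -
  have "\<bar>sin b - (\<Sum>m<2. sin_coeff m * b ^ m)\<bar> \<le> inverse (fact 2) * \<bar>b\<bar> ^ 2"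
    by (rule Maclaurin_sin_bound)
  moreover have "(\<Sum>m<2. sin_coeff m * b ^ m) = b"
    by (simp add: numeral_2_eq_2 sin_coeff_Suc)
  ultimately show ?thesis by simp
qed

lemma abs_cos_sub_one_le: "\<bar>cos b - 1\<bar> \<le> b\<^sup>2 / 2"
  for b :: real
proof -
  have "cos b = 1 - 2 * sin (b/2) ^ 2" using cos_double_sin[of "b/2"] by simp
  moreover have "sin (b/2) ^ 2 \<le> (b/2)\<^sup>2"
    using abs_sin_x_le_abs_x[of "b/2"] by (metis power2_abs power_mono abs_ge_zero)
  ultimately show ?thesis by (auto simp: power2_eq_square)
qed

lemma abs_mult_le_of_abs_le_one: "\<bar>x\<bar> \<le> 1 \<Longrightarrow> \<bar>y\<bar> \<le> B \<Longrightarrow> \<bar>x * y\<bar> \<le> B"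
  for x y B :: real
  using mult_mono[of "\<bar>x\<bar>" 1 "\<bar>y\<bar>" B] by (simp add: abs_mult)

lemma cos_add_linearization_le: "\<bar>cos (a + b) - cos a + sin a * b\<bar> \<le> b\<^sup>2"
  for a b :: real
proof -
  have "cos (a + b) - cos a + sin a * b = cos a * (cos b - 1) - sin a * (sin b - b)"
    by (simp add: cos_add algebra_simps)
  moreover have "\<bar>cos a * (cos b - 1)\<bar> \<le> b\<^sup>2 / 2" "\<bar>sin a * (sin b - b)\<bar> \<le> b\<^sup>2 / 2"
    by (rule abs_mult_le_of_abs_le_one[OF abs_cos_le_one abs_cos_sub_one_le],
        rule abs_mult_le_of_abs_le_one[OF abs_sin_le_one abs_sin_sub_le])
  ultimately show ?thesis by linarith
qed

lemma sin_add_linearization_le: "\<bar>sin (a + b) - sin a - cos a * b\<bar> \<le> b\<^sup>2"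
  for a b :: real
proof -
  have "sin (a + b) - sin a - cos a * b = sin a * (cos b - 1) + cos a * (sin b - b)"
    by (simp add: sin_add algebra_simps)
  moreover have "\<bar>sin a * (cos b - 1)\<bar> \<le> b\<^sup>2 / 2" "\<bar>cos a * (sin b - b)\<bar> \<le> b\<^sup>2 / 2"
    by (rule abs_mult_le_of_abs_le_one[OF abs_sin_le_one abs_cos_sub_one_le],
        rule abs_mult_le_of_abs_le_one[OF abs_cos_le_one abs_sin_sub_le])
  ultimately show ?thesis by linarith
qed

lemma abs_cos_diff_le: "\<bar>cos a - cos b\<bar> \<le> \<bar>a - b\<bar>"
  for a b :: real
proof -
  have "\<bar>cos a - cos b\<bar> = 2 * \<bar>sin ((a + b) / 2)\<bar> * \<bar>sin ((b - a) / 2)\<bar>"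
    by (simp add: cos_diff_cos abs_mult)
  also have "\<dots> \<le> 2 * 1 * \<bar>(b - a) / 2\<bar>"
    by (intro mult_mono abs_sin_le_one abs_sin_x_le_abs_x) auto
  finally show ?thesis by simp
qed

lemma abs_sin_diff_le: "\<bar>sin a - sin b\<bar> \<le> \<bar>a - b\<bar>"
  for a b :: real
proof -
  have "\<bar>sin a - sin b\<bar> = 2 * \<bar>sin ((a - b) / 2)\<bar> * \<bar>cos ((a + b) / 2)\<bar>"
    by (simp add: sin_diff_sin abs_mult)
  also have "\<dots> \<le> 2 * \<bar>(a - b) / 2\<bar> * 1"
    by (intro mult_mono abs_cos_le_one abs_sin_x_le_abs_x) auto
  finally show ?thesis by simp
qed

lemma norm_triple_le: "norm (a, b, c) \<le> \<bar>a\<bar> + \<bar>b\<bar> + \<bar>c\<bar>"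
  for a b c :: real
  using norm_Pair_le[of a "(b, c)"] norm_Pair_le[of b c] by simp

lemma abs_le_norm_triple: "\<bar>a\<bar> \<le> norm (a, b, c)" "\<bar>b\<bar> \<le> norm (a, b, c)" "\<bar>c\<bar> \<le> norm (a, b, c)"
  for a b c :: real
  using norm_fst_le[of a "(b, c)"] norm_snd_le[of "(b, c)" a] norm_fst_le[of b c] norm_snd_le[of c b]
  by auto

section \<open>The constraint map and its derivative\<close>

type_synonym v3 = "real \<times> real \<times> real"

text \<open>For \<open>\<theta> = primitive f\<close> the three components are \<open>\<theta>(L)\<close>, \<open>x(L)\<close> and \<open>y(L) + 1\<close>.\<close>
definition constraint :: "real \<Rightarrow> (real \<Rightarrow> real) \<Rightarrow> v3" where
  "constraint L f = (LINT s:{0..L}|lborel. f s,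
     LINT s:{0..L}|lborel. cos (primitive f s), LINT s:{0..L}|lborel. sin (primitive f s))"

definition constraint_deriv :: "real \<Rightarrow> (real \<Rightarrow> real) \<Rightarrow> (real \<Rightarrow> real) \<Rightarrow> v3" where
  "constraint_deriv L g \<phi> = (LINT s:{0..L}|lborel. \<phi> s,
     - (LINT s:{0..L}|lborel. sin (primitive g s) * primitive \<phi> s),
     LINT s:{0..L}|lborel. cos (primitive g s) * primitive \<phi> s)"

lemma continuous_on_comp_primitive:
  fixes F :: "real \<Rightarrow> real"
  assumes "set_integrable lborel {0..L} f" "continuous_on UNIV F"
  shows "continuous_on {0..L} (\<lambda>s. F (primitive f s))"
  by (rule continuous_on_compose2[OF assms(2) continuous_on_primitive[OF assms(1)]]) auto

lemma set_integrable_comp_primitive: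
  fixes F :: "real \<Rightarrow> real"
  assumes "set_integrable lborel {0..L} f" "continuous_on UNIV F"
  shows "set_integrable lborel {0..L} (\<lambda>s. F (primitive f s))"
  by (rule borel_integrable_atLeastAtMost'[OF continuous_on_comp_primitive[OF assms]])

lemma set_integrable_comp_primitive_mult:
  fixes F :: "real \<Rightarrow> real"
  assumes "set_integrable lborel {0..L} f" "set_integrable lborel {0..L} h" "continuous_on UNIV F"
  shows "set_integrable lborel {0..L} (\<lambda>s. F (primitive f s) * primitive h s)"
  by (intro borel_integrable_atLeastAtMost' continuous_intros continuous_on_comp_primitive
      continuous_on_primitive assms)

lemma abs_set_integral_linearization_le:
  fixes F F' :: "real \<Rightarrow> real"
  assumes g: "set_integrable lborel {0..L} g" and \<phi>: "set_integrable lborel {0..L} \<phi>" and "0 \<le> L"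
    and F: "continuous_on UNIV F" and F': "continuous_on UNIV F'"
    and lin: "\<And>a b. \<bar>F (a + b) - F a - F' a * b\<bar> \<le> b\<^sup>2"
  shows "\<bar>(LINT s:{0..L}|lborel. F (primitive (\<lambda>s. g s + \<phi> s) s)) - (LINT s:{0..L}|lborel. F (primitive g s))
      - (LINT s:{0..L}|lborel. F' (primitive g s) * primitive \<phi> s)\<bar> \<le> (L1_norm L \<phi>)\<^sup>2 * L"
proof -
  have g\<phi>: "set_integrable lborel {0..L} (\<lambda>s. g s + \<phi> s)" using g \<phi> by (rule set_integral_add)
  have "(LINT s:{0..L}|lborel. F (primitive (\<lambda>s. g s + \<phi> s) s)) - (LINT s:{0..L}|lborel. F (primitive g s))
      - (LINT s:{0..L}|lborel. F' (primitive g s) * primitive \<phi> s)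
      = (LINT s:{0..L}|lborel. F (primitive (\<lambda>s. g s + \<phi> s) s) - F (primitive g s) - F' (primitive g s) * primitive \<phi> s)"
    using set_integrable_comp_primitive[OF g\<phi> F] set_integrable_comp_primitive[OF g F]
      set_integrable_comp_primitive_mult[OF g \<phi> F'] by simp
  also have "\<dots> = (LINT s:{0..L}|lborel. F (primitive g s + primitive \<phi> s) - F (primitive g s) - F' (primitive g s) * primitive \<phi> s)"
    by (rule set_lebesgue_integral_cong) (use primitive_add[OF g \<phi>] in auto)
  finally have eq: "(LINT s:{0..L}|lborel. F (primitive (\<lambda>s. g s + \<phi> s) s)) - (LINT s:{0..L}|lborel. F (primitive g s))
      - (LINT s:{0..L}|lborel. F' (primitive g s) * primitive \<phi> s) = \<dots>" .
  have sq: "(primitive \<phi> s)\<^sup>2 \<le> (L1_norm L \<phi>)\<^sup>2" if "s \<in> {0..L}" for s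
    using abs_primitive_le_L1_norm[OF \<phi>, of s] that by (metis atLeastAtMost_iff abs_ge_zero power2_abs power_mono)
  have "\<bar>LINT s:{0..L}|lborel. F (primitive g s + primitive \<phi> s) - F (primitive g s) - F' (primitive g s) * primitive \<phi> s\<bar>
      \<le> (L1_norm L \<phi>)\<^sup>2 * (L - 0)"
  proof (rule abs_set_integral_le)
    have "continuous_on {0..L} (\<lambda>s. F (primitive g s + primitive \<phi> s))"
      by (rule continuous_on_compose2[OF F]) (auto intro!: continuous_intros continuous_on_primitive g \<phi>)
    then show "set_integrable lborel {0..L} (\<lambda>s. F (primitive g s + primitive \<phi> s) - F (primitive g s) - F' (primitive g s) * primitive \<phi> s)"
      by (intro borel_integrable_atLeastAtMost' continuous_intros continuous_on_comp_primitive
          continuous_on_primitive F F' g \<phi>)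
  qed (use \<open>0 \<le> L\<close> sq lin order_trans in blast)+
  then show ?thesis unfolding eq by simp
qed

lemma constraint_remainder_le:
  assumes g: "set_integrable lborel {0..L} g" and \<phi>: "set_integrable lborel {0..L} \<phi>" and "0 \<le> L"
  shows "norm (constraint L (\<lambda>s. g s + \<phi> s) - constraint L g - constraint_deriv L g \<phi>) \<le> 2 * L * (L1_norm L \<phi>)\<^sup>2"
proof -
  have "(LINT s:{0..L}|lborel. g s + \<phi> s) - (LINT s:{0..L}|lborel. g s) - (LINT s:{0..L}|lborel. \<phi> s) = 0"
    using g \<phi> by simp
  moreover have "\<bar>(LINT s:{0..L}|lborel. cos (primitive (\<lambda>s. g s + \<phi> s) s)) - (LINT s:{0..L}|lborel. cos (primitive g s))
      - (- (LINT s:{0..L}|lborel. sin (primitive g s) * primitive \<phi> s))\<bar> \<le> (L1_norm L \<phi>)\<^sup>2 * L"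
    using abs_set_integral_linearization_le[OF g \<phi> \<open>0 \<le> L\<close>, of cos "\<lambda>a. - sin a"] cos_add_linearization_le
    by (simp add: continuous_intros set_integral_uminus set_integrable_comp_primitive_mult[OF g \<phi>])
  moreover have "\<bar>(LINT s:{0..L}|lborel. sin (primitive (\<lambda>s. g s + \<phi> s) s)) - (LINT s:{0..L}|lborel. sin (primitive g s))
      - (LINT s:{0..L}|lborel. cos (primitive g s) * primitive \<phi> s)\<bar> \<le> (L1_norm L \<phi>)\<^sup>2 * L"
    using abs_set_integral_linearization_le[OF g \<phi> \<open>0 \<le> L\<close>, of sin cos] sin_add_linearization_le
    by (simp add: continuous_intros)
  ultimately have "norm (constraint L (\<lambda>s. g s + \<phi> s) - constraint L g - constraint_deriv L g \<phi>)
      \<le> 0 + (L1_norm L \<phi>)\<^sup>2 * L + (L1_norm L \<phi>)\<^sup>2 * L"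
    unfolding constraint_def constraint_deriv_def
    by (simp only: diff_Pair, intro order_trans[OF norm_triple_le]) linarith
  then show ?thesis by (simp add: algebra_simps)
qed

lemma abs_set_integral_comp_primitive_diff_le:
  fixes F :: "real \<Rightarrow> real"
  assumes f1: "set_integrable lborel {0..L} f1" and f2: "set_integrable lborel {0..L} f2" and "0 \<le> L"
    and F: "continuous_on UNIV F" and lip: "\<And>a b. \<bar>F a - F b\<bar> \<le> \<bar>a - b\<bar>"
  shows "\<bar>(LINT s:{0..L}|lborel. F (primitive f1 s)) - (LINT s:{0..L}|lborel. F (primitive f2 s))\<bar>
    \<le> L1_norm L (\<lambda>s. f1 s - f2 s) * L"
proof -
  have d: "set_integrable lborel {0..L} (\<lambda>s. f1 s - f2 s)" using f1 f2 by (rule set_integral_diff)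
  have diff: "\<bar>primitive f1 s - primitive f2 s\<bar> \<le> L1_norm L (\<lambda>s. f1 s - f2 s)" if "s \<in> {0..L}" for s
    using abs_primitive_le_L1_norm[OF d, of s] primitive_add[OF f1 set_integrable_mult_right[OF f2, of "-1"], of s]
      primitive_cmult[of "-1" f2 s] that by simp
  have "\<bar>LINT s:{0..L}|lborel. F (primitive f1 s) - F (primitive f2 s)\<bar> \<le> L1_norm L (\<lambda>s. f1 s - f2 s) * (L - 0)"
  proof (rule abs_set_integral_le)
    show "set_integrable lborel {0..L} (\<lambda>s. F (primitive f1 s) - F (primitive f2 s))"
      by (intro set_integral_diff set_integrable_comp_primitive f1 f2 F)
    show "\<bar>F (primitive f1 s) - F (primitive f2 s)\<bar> \<le> L1_norm L (\<lambda>s. f1 s - f2 s)" if "s \<in> {0..L}" for s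
      using lip[of "primitive f1 s" "primitive f2 s"] diff[OF that] by linarith
  qed (use \<open>0 \<le> L\<close> in simp)
  then show ?thesis using set_integrable_comp_primitive[OF f1 F] set_integrable_comp_primitive[OF f2 F] by simp
qed

lemma constraint_lipschitz:
  assumes f1: "set_integrable lborel {0..L} f1" and f2: "set_integrable lborel {0..L} f2" and "0 \<le> L"
  shows "norm (constraint L f1 - constraint L f2) \<le> (1 + 2 * L) * L1_norm L (\<lambda>s. f1 s - f2 s)"
proof -
  let ?N = "L1_norm L (\<lambda>s. f1 s - f2 s)"
  have "\<bar>(LINT s:{0..L}|lborel. f1 s) - (LINT s:{0..L}|lborel. f2 s)\<bar> \<le> ?N"
    using abs_primitive_le_L1_norm[OF set_integral_diff(1)[OF f1 f2] \<open>0 \<le> L\<close> order_refl] f1 f2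
    by (simp add: primitive_def)
  moreover have "\<bar>(LINT s:{0..L}|lborel. cos (primitive f1 s)) - (LINT s:{0..L}|lborel. cos (primitive f2 s))\<bar> \<le> ?N * L"
    by (rule abs_set_integral_comp_primitive_diff_le[OF f1 f2 \<open>0 \<le> L\<close> continuous_on_cos[OF continuous_on_id] abs_cos_diff_le])
  moreover have "\<bar>(LINT s:{0..L}|lborel. sin (primitive f1 s)) - (LINT s:{0..L}|lborel. sin (primitive f2 s))\<bar> \<le> ?N * L"
    by (rule abs_set_integral_comp_primitive_diff_le[OF f1 f2 \<open>0 \<le> L\<close> continuous_on_sin[OF continuous_on_id] abs_sin_diff_le])
  ultimately have "norm (constraint L f1 - constraint L f2) \<le> ?N + ?N * L + ?N * L"
    unfolding constraint_def by (simp only: diff_Pair, intro order_trans[OF norm_triple_le]) linarith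
  then show ?thesis by (simp add: algebra_simps)
qed

lemma constraint_deriv_add:
  assumes g: "set_integrable lborel {0..L} g"
    and \<phi>1: "set_integrable lborel {0..L} \<phi>1" and \<phi>2: "set_integrable lborel {0..L} \<phi>2"
  shows "constraint_deriv L g (\<lambda>s. \<phi>1 s + \<phi>2 s) = constraint_deriv L g \<phi>1 + constraint_deriv L g \<phi>2"
proof -
  have "(LINT s:{0..L}|lborel. F (primitive g s) * primitive (\<lambda>s. \<phi>1 s + \<phi>2 s) s)
      = (LINT s:{0..L}|lborel. F (primitive g s) * primitive \<phi>1 s) + (LINT s:{0..L}|lborel. F (primitive g s) * primitive \<phi>2 s)"
    if F: "continuous_on UNIV F" for F :: "real \<Rightarrow> real"
  proof -
    have "(LINT s:{0..L}|lborel. F (primitive g s) * primitive (\<lambda>s. \<phi>1 s + \<phi>2 s) s)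
      = (LINT s:{0..L}|lborel. F (primitive g s) * primitive \<phi>1 s + F (primitive g s) * primitive \<phi>2 s)"
      by (rule set_lebesgue_integral_cong) (auto simp: primitive_add[OF \<phi>1 \<phi>2] algebra_simps)
    then show ?thesis
      using set_integrable_comp_primitive_mult[OF g \<phi>1 F] set_integrable_comp_primitive_mult[OF g \<phi>2 F] by simp
  qed
  then show ?thesis unfolding constraint_deriv_def
    using \<phi>1 \<phi>2 by (simp add: continuous_on_sin continuous_on_cos continuous_on_id)
qed

lemma constraint_deriv_cmult: "constraint_deriv L g (\<lambda>s. c * \<phi> s) = c *\<^sub>R constraint_deriv L g \<phi>"
  unfolding constraint_deriv_def primitive_cmult by (simp add: mult.left_commute)

definition tail_integral :: "real \<Rightarrow> (real \<Rightarrow> real) \<Rightarrow> (real \<Rightarrow> real) \<Rightarrow> real \<Rightarrow> real" where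
  "tail_integral L F g t = (LINT u:{t..L}|lborel. F (primitive g u))"

context
  fixes L :: real and F g :: "real \<Rightarrow> real"
  assumes g: "set_integrable lborel {0..L} g" and F: "continuous_on UNIV F"
begin

lemma tail_integral_eq:
  assumes "t \<in> {0..L}"
  shows "tail_integral L F g t = primitive (\<lambda>u. F (primitive g u)) L - primitive (\<lambda>u. F (primitive g u)) t"
  using primitive_diff[OF set_integrable_comp_primitive[OF g F], of t L] assms by (simp add: tail_integral_def)

lemma continuous_on_tail_integral: "continuous_on {0..L} (tail_integral L F g)"
proof -
  have "continuous_on {0..L} (\<lambda>t. primitive (\<lambda>u. F (primitive g u)) L - primitive (\<lambda>u. F (primitive g u)) t)"
    using continuous_on_primitive[OF set_integrable_comp_primitive[OF g F]] by (intro continuous_on_diff) auto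
  then show ?thesis by (rule continuous_on_eq) (simp add: tail_integral_eq)
qed

lemma has_real_derivative_tail_integral:
  assumes t: "t \<in> {0..L}"
  shows "(tail_integral L F g has_real_derivative - F (primitive g t)) (at t within {0..L})"
proof -
  have "(primitive (\<lambda>u. F (primitive g u)) has_real_derivative F (primitive g t)) (at t within {0..L})"
    by (rule has_real_derivative_primitive[OF continuous_on_comp_primitive[OF g F] t])
  then have "((\<lambda>t. primitive (\<lambda>u. F (primitive g u)) L - primitive (\<lambda>u. F (primitive g u)) t)
      has_real_derivative - F (primitive g t)) (at t within {0..L})"
    using DERIV_diff[OF DERIV_const] by fastforce
  then show ?thesis
    by (rule has_field_derivative_transform_within[where d=1]) (use t in \<open>simp_all add: tail_integral_eq\<close>)
qed

lemma abs_tail_integral_diff_le: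
  assumes bound: "\<And>x. \<bar>F x\<bar> \<le> 1" and s: "s \<in> {0..L}" and t: "t \<in> {0..L}"
  shows "\<bar>tail_integral L F g s - tail_integral L F g t\<bar> \<le> \<bar>s - t\<bar>"
proof -
  have ordered: "\<bar>tail_integral L F g a - tail_integral L F g b\<bar> \<le> b - a"
    if ab: "a \<le> b" "a \<in> {0..L}" "b \<in> {0..L}" for a b
  proof -
    have Fi: "set_integrable lborel {a..b} (\<lambda>u. F (primitive g u))"
      using set_integrable_subinterval[OF set_integrable_comp_primitive[OF g F], of a b] ab by simp
    have "tail_integral L F g a - tail_integral L F g b = (LINT u:{a..b}|lborel. F (primitive g u))"
      using tail_integral_eq[OF ab(2)] tail_integral_eq[OF ab(3)]
        primitive_diff[OF set_integrable_comp_primitive[OF g F], of a b] ab by simp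
    also have "\<bar>\<dots>\<bar> \<le> 1 * (b - a)"
      by (rule abs_set_integral_le[OF Fi bound ab(1)])
    finally show ?thesis by simp
  qed
  show ?thesis
  proof (cases "s \<le> t")
    case True then show ?thesis using ordered[OF True s t] by simp
  next
    case False then show ?thesis using ordered[of t s] s t by (simp add: abs_minus_commute)
  qed
qed

lemma set_integral_comp_primitive_mult_primitive:
  assumes \<phi>m: "\<phi> \<in> borel_measurable borel" and \<phi>: "set_integrable lborel {0..L} \<phi>"
    and "0 \<le> L" and bound: "\<And>x. \<bar>F x\<bar> \<le> 1"
  shows "(LINT u:{0..L}|lborel. F (primitive g u) * primitive \<phi> u) = (LINT t:{0..L}|lborel. \<phi> t * tail_integral L F g t)"
proof -
  define H where "H u = indicator {0..L} u * F (primitive g u)" for u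
  have "H \<in> borel_measurable borel"
    unfolding H_def using borel_measurable_continuous_on_indicator[OF _ continuous_on_comp_primitive[OF g F]] by simp
  moreover have "\<bar>H u\<bar> \<le> 1" for u using bound[of "primitive g u"] by (auto simp: H_def indicator_def)
  ultimately have "(LINT u:{0..L}|lborel. H u * primitive \<phi> u) = (LINT t:{0..L}|lborel. \<phi> t * (LINT u:{t..L}|lborel. H u))"
    using set_integral_mult_primitive[OF \<phi>m _ \<phi> _ \<open>0 \<le> L\<close>] by blast
  moreover have "(LINT u:{0..L}|lborel. H u * primitive \<phi> u) = (LINT u:{0..L}|lborel. F (primitive g u) * primitive \<phi> u)"
    by (rule set_lebesgue_integral_cong) (auto simp: H_def)
  moreover have "(LINT u:{t..L}|lborel. H u) = tail_integral L F g t" if "t \<in> {0..L}" for t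
    unfolding tail_integral_def by (rule set_lebesgue_integral_cong) (use that in \<open>auto simp: H_def\<close>)
  then have "(LINT t:{0..L}|lborel. \<phi> t * (LINT u:{t..L}|lborel. H u)) = (LINT t:{0..L}|lborel. \<phi> t * tail_integral L F g t)"
    by (intro set_lebesgue_integral_cong) auto
  ultimately show ?thesis by simp
qed

end

lemma constraint_deriv_eq_tail_integrals:
  assumes g: "set_integrable lborel {0..L} g" and \<phi>m: "\<phi> \<in> borel_measurable borel"
    and \<phi>: "set_integrable lborel {0..L} \<phi>" and "0 \<le> L"
  shows "constraint_deriv L g \<phi> = (LINT t:{0..L}|lborel. \<phi> t,
    - (LINT t:{0..L}|lborel. \<phi> t * tail_integral L sin g t), LINT t:{0..L}|lborel. \<phi> t * tail_integral L cos g t)"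
  unfolding constraint_deriv_def
  using set_integral_comp_primitive_mult_primitive[OF g _ \<phi>m \<phi> \<open>0 \<le> L\<close>, of sin]
    set_integral_comp_primitive_mult_primitive[OF g _ \<phi>m \<phi> \<open>0 \<le> L\<close>, of cos]
  by (simp add: continuous_on_sin continuous_on_cos continuous_on_id)

lemma continuous_nonzero_imp_sign_constant:
  fixes P :: "real \<Rightarrow> real"
  assumes P: "continuous_on {a..b} P" and nz: "\<And>t. a < t \<Longrightarrow> t < b \<Longrightarrow> P t \<noteq> 0"
  obtains \<sigma> :: real where "\<And>t. a < t \<Longrightarrow> t < b \<Longrightarrow> 0 < \<sigma> * P t"
proof -
  have "(\<forall>t. a < t \<and> t < b \<longrightarrow> 0 < P t) \<or> (\<forall>t. a < t \<and> t < b \<longrightarrow> P t < 0)"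
  proof (rule ccontr)
    assume "\<not> ?thesis"
    then obtain t1 t2 where t1: "a < t1" "t1 < b" "P t1 < 0" and t2: "a < t2" "t2 < b" "0 < P t2"
      using nz by (meson linorder_neqE_linordered_idom)
    have "\<exists>x. min t1 t2 \<le> x \<and> x \<le> max t1 t2 \<and> P x = 0"
    proof (cases "t1 \<le> t2")
      case True then show ?thesis
        using IVT'[of P t1 0 t2] t1 t2 continuous_on_subset[OF P, of "{t1..t2}"] by auto
    next
      case False then show ?thesis
        using IVT2'[of P t1 0 t2] t1 t2 continuous_on_subset[OF P, of "{t2..t1}"] by auto
    qed
    then show False using nz t1 t2 by force
  qed
  then show ?thesis
    using that[of 1] that[of "-1"] by (auto simp: neg_0_less_iff_less)
qed

lemma nonzero_near_of_nonzero_derivative: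
  fixes P :: "real \<Rightarrow> real"
  assumes dP: "(P has_real_derivative d) (at t0)" and "d \<noteq> 0"
  obtains e where "0 < e" "\<And>t. 0 < \<bar>t - t0\<bar> \<Longrightarrow> \<bar>t - t0\<bar> < e \<Longrightarrow> P t \<noteq> 0"
proof (cases "P t0 = 0")
  case False
  from continuous_at_avoid[OF DERIV_isCont[OF dP] False] obtain e where "0 < e" "\<forall>y. dist t0 y < e \<longrightarrow> P y \<noteq> 0"
    by auto
  then show ?thesis by (intro that[of e]) (auto simp: dist_real_def abs_minus_commute)
next
  case True
  \<comment> \<open>\<open>P\<close> is strictly monotone across the zero \<open>t0\<close>\<close>
  obtain d1 d2 where d: "0 < d1" "0 < d2"
    and right: "\<And>h. 0 < h \<Longrightarrow> h < d1 \<Longrightarrow> P (t0 + h) \<noteq> 0" and left: "\<And>h. 0 < h \<Longrightarrow> h < d2 \<Longrightarrow> P (t0 - h) \<noteq> 0"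
  proof (cases "0 < d")
    case True
    from DERIV_pos_inc_right[OF dP True] DERIV_pos_inc_left[OF dP True] show ?thesis
      using that True \<open>P t0 = 0\<close> by (metis less_irrefl)
  next
    case False
    then have "d < 0" using \<open>d \<noteq> 0\<close> by simp
    from DERIV_neg_dec_right[OF dP this] DERIV_neg_dec_left[OF dP this] show ?thesis
      using that \<open>P t0 = 0\<close> by (metis less_irrefl)
  qed
  show ?thesis
  proof (rule that[of "min d1 d2"])
    fix t assume "0 < \<bar>t - t0\<bar>" "\<bar>t - t0\<bar> < min d1 d2"
    then show "P t \<noteq> 0" using right[of "t - t0"] left[of "t0 - t"] by (cases "t0 < t") auto
  qed (use d in simp)
qed

lemma sin_cos_combination_vanishing_on_interval:
  fixes c2 c3 a b :: real
  assumes "a < b" and zero: "\<And>v. a < v \<Longrightarrow> v < b \<Longrightarrow> c2 * sin v - c3 * cos v = 0"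
  shows "c2 = 0 \<and> c3 = 0"
proof -
  define m where "m = (a + b) / 2"
  have m: "a < m" "m < b" using \<open>a < b\<close> by (auto simp: m_def)
  have "((\<lambda>v. c2 * sin v - c3 * cos v) has_real_derivative (c2 * cos m + c3 * sin m)) (at m)"
    by (auto intro!: derivative_eq_intros)
  moreover have "((\<lambda>v. c2 * sin v - c3 * cos v) has_real_derivative 0) (at m)"
    by (rule has_field_derivative_transform_within_open[where f="\<lambda>_. 0" and S="{a<..<b}"])
       (use m zero in auto)
  ultimately have "c2 * cos m + c3 * sin m = 0" by (rule DERIV_unique)
  moreover have "c2 * sin m - c3 * cos m = 0" using zero m by simp
  moreover have "sin m * sin m + cos m * cos m = 1"
    using sin_cos_squared_add[of m] by (simp add: power2_eq_square)
  ultimately show ?thesis by algebra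
qed

section \<open>Minimizers with prescribed length\<close>

locale fixed_length_minimizer =
  fixes L :: real and g :: "real \<Rightarrow> real"
  assumes L_pos: "0 < L" and sq_integrable_g: "sq_integrable L g"
    and g_nonneg: "AE s in lborel. s \<in> {0..L} \<longrightarrow> 0 \<le> g s"
    and primitive_g_pos: "0 < primitive g L"
    and minimal: "\<And>f. sq_integrable L f \<Longrightarrow> (AE s in lborel. s \<in> {0..L} \<longrightarrow> 0 \<le> f s) \<Longrightarrow>
      constraint L f = constraint L g \<Longrightarrow> (LINT s:{0..L}|lborel. (g s)\<^sup>2) \<le> (LINT s:{0..L}|lborel. (f s)\<^sup>2)"
begin

lemma set_integrable_g: "set_integrable lborel {0..L} g"
  by (rule sq_integrable_imp_set_integrable[OF sq_integrable_g])

lemma primitive_g_mono: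
  assumes "0 \<le> a" "a \<le> b" "b \<le> L"
  shows "primitive g a \<le> primitive g b"
proof -
  have "0 \<le> (LINT u:{a..b}|lborel. g u)"
    unfolding set_lebesgue_integral_def
    by (rule integral_nonneg_AE) (use g_nonneg assms in \<open>auto simp: indicator_def elim: AE_mp\<close>)
  then show ?thesis using primitive_diff[OF set_integrable_g assms] by simp
qed

definition lagrange_fun :: "real \<Rightarrow> real \<Rightarrow> real \<Rightarrow> real \<Rightarrow> real" where
  "lagrange_fun c1 c2 c3 t = c1 - c2 * tail_integral L sin g t + c3 * tail_integral L cos g t"

lemma continuous_on_lagrange_fun: "continuous_on {0..L} (lagrange_fun c1 c2 c3)"
  unfolding lagrange_fun_def
  by (intro continuous_intros continuous_on_tail_integral set_integrable_g continuous_on_sin continuous_on_cos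
      continuous_on_id)

lemma has_real_derivative_lagrange_fun:
  assumes "t \<in> {0..L}"
  shows "(lagrange_fun c1 c2 c3 has_real_derivative (c2 * sin (primitive g t) - c3 * cos (primitive g t)))
    (at t within {0..L})"
proof -
  have "(tail_integral L sin g has_real_derivative - sin (primitive g t)) (at t within {0..L})"
    "(tail_integral L cos g has_real_derivative - cos (primitive g t)) (at t within {0..L})"
    by (rule has_real_derivative_tail_integral[OF set_integrable_g _ assms],
        simp add: continuous_on_sin continuous_on_cos continuous_on_id)+
  from DERIV_add[OF DERIV_diff[OF DERIV_const DERIV_cmult[OF this(1)]] DERIV_cmult[OF this(2)]]
  show ?thesis unfolding lagrange_fun_def[abs_def] by (simp add: algebra_simps)
qed

lemma set_integrable_g_mult_continuous:
  assumes "continuous_on {0..L} P" "0 \<le> a" "b \<le> L"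
  shows "set_integrable lborel {a..b} (\<lambda>t. g t * P t)"
  using set_integrable_subinterval[OF set_integrable_mult_continuous[OF sq_integrable_g assms(1)] assms(2,3)] .

text \<open>Since \<open>g \<ge> 0\<close>, a weight that keeps a strict sign can only be orthogonal to \<open>g\<close> where \<open>g\<close> vanishes.\<close>
lemma primitive_g_eq_of_orthogonal:
  fixes P :: "real \<Rightarrow> real"
  assumes ab: "0 \<le> a" "a \<le> b" "b \<le> L" and P: "continuous_on {0..L} P"
    and orth: "(LINT t:{a..b}|lborel. g t * P t) = 0"
    and nz: "\<And>t. a < t \<Longrightarrow> t < b \<Longrightarrow> P t \<noteq> 0"
  shows "primitive g a = primitive g b"
proof -
  obtain \<sigma> :: real where pos: "\<And>t. a < t \<Longrightarrow> t < b \<Longrightarrow> 0 < \<sigma> * P t"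
    using continuous_nonzero_imp_sign_constant[OF continuous_on_subset[OF P] nz] ab by auto
  have int: "integrable lborel (\<lambda>t. indicator {a..b} t * (\<sigma> * (g t * P t)))"
    using set_integrable_g_mult_continuous[OF P ab(1,3)] unfolding set_integrable_def by (simp add: mult.left_commute)
  have ends: "AE t in lborel. t \<noteq> a \<and> t \<noteq> b" using AE_lborel_singleton[of a] AE_lborel_singleton[of b] by auto
  have "AE t in lborel. 0 \<le> indicator {a..b} t * (\<sigma> * (g t * P t))"
    using g_nonneg ends
  proof eventually_elim
    case (elim t)
    show ?case
    proof (cases "t \<in> {a..b}")
      case True
      then have "0 \<le> g t * (\<sigma> * P t)" using elim pos[of t] ab by simp
      then show ?thesis using True by (simp add: mult.left_commute)
    qed simp
  qed
  moreover have "(\<integral>t. indicator {a..b} t * (\<sigma> * (g t * P t)) \<partial>lborel) = 0"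
    using orth by (simp add: set_lebesgue_integral_def mult.left_commute)
  ultimately have "AE t in lborel. indicator {a..b} t * (\<sigma> * (g t * P t)) = 0"
    using integral_nonneg_eq_0_iff_AE[OF int] by simp
  with ends have "AE t in lborel. t \<in> {a..b} \<longrightarrow> g t = 0"
  proof eventually_elim
    case (elim t)
    show ?case
    proof
      assume t: "t \<in> {a..b}"
      then have "\<sigma> * P t \<noteq> 0" using elim pos[of t] by force
      then show "g t = 0" using elim t by simp
    qed
  qed
  then have "(LINT t:{a..b}|lborel. g t) = 0"
    unfolding set_lebesgue_integral_def by (intro integral_eq_zero_AE) (auto simp: indicator_def elim: AE_mp)
  then show ?thesis using primitive_diff[OF set_integrable_g ab] by simp
qed

lemma has_real_derivative_primitive_g_zero:
  fixes P :: "real \<Rightarrow> real"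
  assumes t0: "0 < t0" "t0 < L" and P: "continuous_on {0..L} P"
    and orth: "\<And>a b. 0 \<le> a \<Longrightarrow> a \<le> b \<Longrightarrow> b \<le> L \<Longrightarrow> (LINT t:{a..b}|lborel. g t * P t) = 0"
    and dP: "(P has_real_derivative d) (at t0)" and "d \<noteq> 0"
  shows "(primitive g has_real_derivative 0) (at t0)"
proof -
  obtain e where e: "0 < e" "\<And>t. 0 < \<bar>t - t0\<bar> \<Longrightarrow> \<bar>t - t0\<bar> < e \<Longrightarrow> P t \<noteq> 0"
    using nonzero_near_of_nonzero_derivative[OF dP \<open>d \<noteq> 0\<close>] by blast
  define \<epsilon> where "\<epsilon> = min (e/2) (min t0 (L - t0))"
  have \<epsilon>: "0 < \<epsilon>" "\<epsilon> < e" "\<epsilon> \<le> t0" "t0 + \<epsilon> \<le> L" using e t0 by (auto simp: \<epsilon>_def)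
  have "primitive g (t0 - \<epsilon>) = primitive g t0"
    by (rule primitive_g_eq_of_orthogonal[OF _ _ _ P orth]) (use \<epsilon> t0 e(2) in auto)
  moreover have "primitive g t0 = primitive g (t0 + \<epsilon>)"
    by (rule primitive_g_eq_of_orthogonal[OF _ _ _ P orth]) (use \<epsilon> t0 e(2) in auto)
  ultimately have const: "primitive g t0 = primitive g t" if "t \<in> {t0 - \<epsilon><..<t0 + \<epsilon>}" for t
    using primitive_g_mono[of "t0 - \<epsilon>" t] primitive_g_mono[of t "t0 + \<epsilon>"] that \<epsilon> by auto
  show ?thesis
    by (rule has_field_derivative_transform_within_open[OF DERIV_const, of "{t0 - \<epsilon><..<t0 + \<epsilon>}"])
       (use \<epsilon> const in auto)
qed

text \<open>If \<open>c2 = c3 = 0\<close> the hypothesis contradicts \<open>primitive g L > 0\<close>; otherwise \<open>c2 sin v - c3 cos v\<close> is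
  nonzero near some angle \<open>v\<close> attained by \<open>primitive g\<close>, and there \<open>primitive g\<close> is forced to be
  locally constant.\<close>
lemma lagrange_fun_nondegenerate:
  assumes c: "(c1, c2, c3) \<noteq> (0::v3)"
    and orth: "\<And>a b. 0 \<le> a \<Longrightarrow> a \<le> b \<Longrightarrow> b \<le> L \<Longrightarrow> (LINT t:{a..b}|lborel. g t * lagrange_fun c1 c2 c3 t) = 0"
  shows False
proof (cases "c2 = 0 \<and> c3 = 0")
  case True
  then have "c1 \<noteq> 0" using c by (auto simp: zero_prod_def)
  then have "primitive g 0 = primitive g L"
    by (intro primitive_g_eq_of_orthogonal[OF _ _ _ continuous_on_lagrange_fun orth])
       (use L_pos True in \<open>auto simp: lagrange_fun_def\<close>)
  then show False using primitive_g_pos by simp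
next
  case False
  define h where "h v = c2 * sin v - c3 * cos v" for v
  obtain vs where vs: "0 < vs" "vs < primitive g L" "h vs \<noteq> 0"
    using sin_cos_combination_vanishing_on_interval[OF primitive_g_pos, of c2 c3] False
    by (auto simp: h_def)
  have "isCont h vs" unfolding h_def by (intro continuous_intros)
  then obtain \<delta> where \<delta>: "0 < \<delta>" "\<And>v. dist vs v < \<delta> \<Longrightarrow> h v \<noteq> 0"
    using continuous_at_avoid[of vs h 0] vs(3) by auto
  define v1 where "v1 = vs - min (\<delta>/2) (vs/2)"
  have v1: "0 < v1" "v1 < vs" "vs - v1 < \<delta>" using \<delta> vs by (auto simp: v1_def)
  have cont: "continuous_on {0..L} (primitive g)" by (rule continuous_on_primitive[OF set_integrable_g])
  obtain t0 where t0: "0 \<le> t0" "t0 \<le> L" "primitive g t0 = vs"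
    using IVT'[of "primitive g" 0 vs L] vs cont L_pos by auto
  obtain a where a: "0 \<le> a" "a \<le> t0" "primitive g a = v1"
    using IVT'[of "primitive g" 0 v1 t0] t0 v1 continuous_on_subset[OF cont, of "{0..t0}"] by auto
  have "a < t0" using a t0 v1 by (cases "a = t0") auto
  have "primitive g t0 = primitive g a"
  proof (rule DERIV_isconst_end[OF \<open>a < t0\<close> continuous_on_subset[OF cont]])
    fix s assume s: "a < s" "s < t0"
    then have "v1 \<le> primitive g s" "primitive g s \<le> vs"
      using primitive_g_mono[of a s] primitive_g_mono[of s t0] a t0 by auto
    then have "h (primitive g s) \<noteq> 0" using \<delta>(2)[of "primitive g s"] v1 by (auto simp: dist_real_def)
    moreover have "(lagrange_fun c1 c2 c3 has_real_derivative h (primitive g s)) (at s)"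
      using has_real_derivative_lagrange_fun[of s c1 c2 c3] s a t0
        at_within_interior[of s "{0..L}"] by (simp add: h_def)
    ultimately show "(primitive g has_real_derivative 0) (at s)"
      using s a t0 by (intro has_real_derivative_primitive_g_zero[OF _ _ continuous_on_lagrange_fun orth]) auto
  qed (use a t0 in auto)
  then show False using a t0 v1 by simp
qed

definition local_variation :: "real \<Rightarrow> real \<Rightarrow> real \<Rightarrow> real" where
  "local_variation a b t = g t * indicator {a..b} t"

lemma sq_integrable_local_variation: "sq_integrable L (local_variation a b)"
  unfolding local_variation_def[abs_def] by (rule sq_integrable_mult_indicator[OF sq_integrable_g])

lemma abs_local_variation_le: "\<bar>local_variation a b t\<bar> \<le> \<bar>g t\<bar>"
  by (simp add: local_variation_def indicator_def)

lemma inner_constraint_deriv: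
  assumes \<phi>: "sq_integrable L \<phi>"
  shows "(c1, c2, c3) \<bullet> constraint_deriv L g \<phi> = (LINT t:{0..L}|lborel. \<phi> t * lagrange_fun c1 c2 c3 t)"
proof -
  have tails: "set_integrable lborel {0..L} (\<lambda>t. \<phi> t * tail_integral L F g t)"
    if "continuous_on UNIV F" for F :: "real \<Rightarrow> real"
    by (rule set_integrable_mult_continuous[OF \<phi> continuous_on_tail_integral[OF set_integrable_g that]])
  have \<phi>1: "set_integrable lborel {0..L} \<phi>" by (rule sq_integrable_imp_set_integrable[OF \<phi>])
  have "(c1, c2, c3) \<bullet> constraint_deriv L g \<phi> = c1 * (LINT t:{0..L}|lborel. \<phi> t)
      - c2 * (LINT t:{0..L}|lborel. \<phi> t * tail_integral L sin g t) + c3 * (LINT t:{0..L}|lborel. \<phi> t * tail_integral L cos g t)"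
    using constraint_deriv_eq_tail_integrals[OF set_integrable_g sq_integrable_measurable[OF \<phi>] \<phi>1] L_pos
    by (simp add: inner_prod_def)
  also have "\<dots> = (LINT t:{0..L}|lborel. c1 * \<phi> t - c2 * (\<phi> t * tail_integral L sin g t) + c3 * (\<phi> t * tail_integral L cos g t))"
    using \<phi>1 tails[of sin] tails[of cos] by (simp add: continuous_on_sin continuous_on_cos continuous_on_id)
  also have "\<dots> = (LINT t:{0..L}|lborel. \<phi> t * lagrange_fun c1 c2 c3 t)"
    by (rule set_lebesgue_integral_cong) (auto simp: lagrange_fun_def algebra_simps)
  finally show ?thesis .
qed

lemma inner_constraint_deriv_local_variation:
  assumes "0 \<le> a" "a \<le> b" "b \<le> L"
  shows "(c1, c2, c3) \<bullet> constraint_deriv L g (local_variation a b) = (LINT t:{a..b}|lborel. g t * lagrange_fun c1 c2 c3 t)"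
  unfolding inner_constraint_deriv[OF sq_integrable_local_variation] set_lebesgue_integral_def
  by (rule Bochner_Integration.integral_cong) (use assms in \<open>auto simp: local_variation_def indicator_def\<close>)

lemma span_constraint_deriv_local_variations:
  "span {constraint_deriv L g (local_variation a b) | a b. 0 \<le> a \<and> a \<le> b \<and> b \<le> L} = UNIV"
    (is "span ?V = UNIV")
proof (rule ccontr)
  assume "span ?V \<noteq> UNIV"
  then obtain c :: v3 where c: "c \<noteq> 0" "\<forall>x\<in>span ?V. c \<bullet> x = 0"
    using span_not_UNIV_orthogonal by blast
  obtain c1 c2 c3 where cc: "c = (c1, c2, c3)" by (cases c) auto
  show False
  proof (rule lagrange_fun_nondegenerate)
    show "(c1, c2, c3) \<noteq> (0::v3)" using c cc by simp
    fix a b assume ab: "0 \<le> a" "a \<le> b" "b \<le> L"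
    then have "c \<bullet> constraint_deriv L g (local_variation a b) = 0" using c by (auto intro!: span_base)
    then show "(LINT t:{a..b}|lborel. g t * lagrange_fun c1 c2 c3 t) = 0"
      using inner_constraint_deriv_local_variation[OF ab] cc by simp
  qed
qed

lemma exists_independent_local_variations:
  obtains a1 b1 a2 b2 a3 b3 where
    "\<And>r1 r2 r3. r1 *\<^sub>R constraint_deriv L g (local_variation a1 b1) + r2 *\<^sub>R constraint_deriv L g (local_variation a2 b2)
        + r3 *\<^sub>R constraint_deriv L g (local_variation a3 b3) = 0 \<Longrightarrow> r1 = 0 \<and> r2 = 0 \<and> r3 = 0"
proof -
  define V where "V = {constraint_deriv L g (local_variation a b) | a b. 0 \<le> a \<and> a \<le> b \<and> b \<le> L}"
  obtain B where B: "B \<subseteq> V" "independent B" "V \<subseteq> span B" "card B = dim V"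
    by (rule basis_exists)
  have "dim V = dim (span V)" by simp
  also have "\<dots> = DIM(v3)" using span_constraint_deriv_local_variations by (simp add: V_def)
  finally have "card B = 3" using B(4) by (simp add: Basis_prod_def card_Un_disjoint disjoint_iff)
  then obtain x y z where xyz: "B = {x, y, z}" "x \<noteq> y" "y \<noteq> z" "x \<noteq> z"
    using card_3_iff[of B] by auto
  then have "x \<in> V" "y \<in> V" "z \<in> V" using B(1) by auto
  then obtain a1 b1 a2 b2 a3 b3 where xyz_eq: "x = constraint_deriv L g (local_variation a1 b1)"
    "y = constraint_deriv L g (local_variation a2 b2)" "z = constraint_deriv L g (local_variation a3 b3)"
    unfolding V_def by blast
  show ?thesis
  proof (rule that)
    fix r1 r2 r3
    assume "r1 *\<^sub>R constraint_deriv L g (local_variation a1 b1) + r2 *\<^sub>R constraint_deriv L g (local_variation a2 b2)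
        + r3 *\<^sub>R constraint_deriv L g (local_variation a3 b3) = 0"
    with xyz_eq have "r1 *\<^sub>R x + r2 *\<^sub>R y + r3 *\<^sub>R z = 0" by simp
    define u where "u v = (if v = x then r1 else if v = y then r2 else r3)" for v
    have "(\<Sum>v\<in>B. u v *\<^sub>R v) = r1 *\<^sub>R x + r2 *\<^sub>R y + r3 *\<^sub>R z"
      using xyz by (simp add: u_def add.assoc)
    also have "\<dots> = 0" by fact
    finally have "\<forall>v\<in>B. u v = 0"
      using B(2) real_vector.dependent_finite[of B] xyz by auto
    then show "r1 = 0 \<and> r2 = 0 \<and> r3 = 0" using xyz by (auto simp: u_def split: if_splits)
  qed
qed

end

section \<open>The Lagrange multiplier\<close>

lemma brouwer_zero_near_translation:
  fixes F :: "'a::euclidean_space \<Rightarrow> 'a"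
  assumes "continuous_on (cball (- v) r) F" "0 < r"
    and "\<And>y. y \<in> cball (- v) r \<Longrightarrow> norm (F y - (v + y)) \<le> r"
  obtains y where "y \<in> cball (- v) r" "F y = 0"
proof -
  have "\<exists>y\<in>cball (- v) r. F y = 0"
  proof (rule brouwer_surjective_cball[OF assms(1,2), where S="{0}"])
    fix x y assume "x \<in> {0::'a}" "y \<in> cball (- v) r"
    moreover have "dist (- v) (y - F y) = norm (F y - (v + y))"
      by (simp add: dist_norm algebra_simps)
    ultimately show "x + (y - F y) \<in> cball (- v) r" using assms(3)[of y] by simp
  qed simp
  then show ?thesis using that by blast
qed

lemma linear_eq_inner_v3:
  fixes f :: "v3 \<Rightarrow> real"
  assumes "linear f"
  shows "f v = (f (1, 0, 0), f (0, 1, 0), f (0, 0, 1)) \<bullet> v"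
proof -
  obtain x y z where v: "v = x *\<^sub>R (1, 0, 0) + y *\<^sub>R (0, 1, 0) + z *\<^sub>R (0, 0, 1)"
    by (cases v) simp
  show ?thesis
    unfolding v linear_add[OF assms] linear_scale[OF assms] by (simp add: inner_prod_def)
qed

locale spanning_variations = fixed_length_minimizer +
  fixes \<psi>1 \<psi>2 \<psi>3 :: "real \<Rightarrow> real"
  assumes sq_integrable_directions: "sq_integrable L \<psi>1" "sq_integrable L \<psi>2" "sq_integrable L \<psi>3"
    and directions_le_g: "\<And>t. \<bar>\<psi>1 t\<bar> \<le> \<bar>g t\<bar>" "\<And>t. \<bar>\<psi>2 t\<bar> \<le> \<bar>g t\<bar>" "\<And>t. \<bar>\<psi>3 t\<bar> \<le> \<bar>g t\<bar>"
    and directions_independent: "\<And>r1 r2 r3. r1 *\<^sub>R constraint_deriv L g \<psi>1 + r2 *\<^sub>R constraint_deriv L g \<psi>2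
      + r3 *\<^sub>R constraint_deriv L g \<psi>3 = 0 \<Longrightarrow> r1 = 0 \<and> r2 = 0 \<and> r3 = 0"
begin

definition direction_comb :: "v3 \<Rightarrow> real \<Rightarrow> real" where
  "direction_comb \<rho> t = fst \<rho> * \<psi>1 t + fst (snd \<rho>) * \<psi>2 t + snd (snd \<rho>) * \<psi>3 t"

definition deriv_comb :: "v3 \<Rightarrow> v3" where
  "deriv_comb \<rho> = fst \<rho> *\<^sub>R constraint_deriv L g \<psi>1 + fst (snd \<rho>) *\<^sub>R constraint_deriv L g \<psi>2
    + snd (snd \<rho>) *\<^sub>R constraint_deriv L g \<psi>3"

definition pairing_comb :: "v3 \<Rightarrow> real" where
  "pairing_comb \<rho> = (LINT s:{0..L}|lborel. g s * direction_comb \<rho> s)"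

lemma sq_integrable_direction_comb: "sq_integrable L (direction_comb \<rho>)"
  unfolding direction_comb_def[abs_def]
  by (intro sq_integrable_add sq_integrable_cmult sq_integrable_directions)

lemma set_integrable_directions: "set_integrable lborel {0..L} \<psi>1" "set_integrable lborel {0..L} \<psi>2"
  "set_integrable lborel {0..L} \<psi>3"
  by (rule sq_integrable_imp_set_integrable[OF sq_integrable_directions(1)],
      rule sq_integrable_imp_set_integrable[OF sq_integrable_directions(2)],
      rule sq_integrable_imp_set_integrable[OF sq_integrable_directions(3)])

lemma constraint_deriv_direction_comb: "constraint_deriv L g (direction_comb \<rho>) = deriv_comb \<rho>"
  unfolding direction_comb_def[abs_def] deriv_comb_def
  by (simp add: constraint_deriv_add[OF set_integrable_g] set_integrable_directions set_integral_add
      constraint_deriv_cmult)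

lemma pairing_comb_eq: "pairing_comb \<rho> = fst \<rho> * (LINT s:{0..L}|lborel. g s * \<psi>1 s)
    + fst (snd \<rho>) * (LINT s:{0..L}|lborel. g s * \<psi>2 s) + snd (snd \<rho>) * (LINT s:{0..L}|lborel. g s * \<psi>3 s)"
proof -
  have "set_integrable lborel {0..L} (\<lambda>s. g s * \<psi> s)" if "sq_integrable L \<psi>" for \<psi>
    by (rule sq_integrable_imp_set_integrable_mult[OF sq_integrable_g that])
  note integrable = this[OF sq_integrable_directions(1)] this[OF sq_integrable_directions(2)]
    this[OF sq_integrable_directions(3)]
  have "pairing_comb \<rho> = (LINT s:{0..L}|lborel. fst \<rho> * (g s * \<psi>1 s) + fst (snd \<rho>) * (g s * \<psi>2 s)
      + snd (snd \<rho>) * (g s * \<psi>3 s))"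
    unfolding pairing_comb_def direction_comb_def
    by (rule set_lebesgue_integral_cong) (auto simp: algebra_simps)
  also have "\<dots> = fst \<rho> * (LINT s:{0..L}|lborel. g s * \<psi>1 s)
    + fst (snd \<rho>) * (LINT s:{0..L}|lborel. g s * \<psi>2 s) + snd (snd \<rho>) * (LINT s:{0..L}|lborel. g s * \<psi>3 s)"
    using integrable by simp
  finally show ?thesis .
qed

lemma linear_deriv_comb: "linear deriv_comb"
  by (rule linearI) (auto simp: deriv_comb_def algebra_simps)

lemma linear_pairing_comb: "linear pairing_comb"
  by (rule linearI) (simp_all only: pairing_comb_eq, auto simp: algebra_simps)

lemma inj_deriv_comb: "inj deriv_comb"
proof -
  have "x = 0" if "deriv_comb x = 0" for x :: v3
    using directions_independent[of "fst x" "fst (snd x)" "snd (snd x)"] that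
    by (cases x) (auto simp: deriv_comb_def zero_prod_def)
  then show ?thesis using linear_injective_0[OF linear_deriv_comb] by blast
qed

lemma deriv_comb_inv: "deriv_comb (inv deriv_comb v) = v"
  using linear_inj_imp_surj[OF linear_deriv_comb inj_deriv_comb] by (simp add: surj_f_inv_f)

lemma linear_inv_deriv_comb: "linear (inv deriv_comb)"
  by (rule inj_linear_imp_inv_linear[OF linear_deriv_comb inj_deriv_comb])

definition multiplier :: v3 where
  "multiplier = (pairing_comb (inv deriv_comb (1, 0, 0)), pairing_comb (inv deriv_comb (0, 1, 0)),
     pairing_comb (inv deriv_comb (0, 0, 1)))"

lemma inner_multiplier_deriv_comb: "multiplier \<bullet> deriv_comb \<rho> = pairing_comb \<rho>"
proof -
  have "linear (pairing_comb \<circ> inv deriv_comb)"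
    by (rule linear_compose[OF linear_inv_deriv_comb linear_pairing_comb])
  from linear_eq_inner_v3[OF this, of "deriv_comb \<rho>"] show ?thesis
    by (simp add: multiplier_def inv_f_f[OF inj_deriv_comb] inner_commute)
qed

definition perturbation :: "real \<Rightarrow> (real \<Rightarrow> real) \<Rightarrow> v3 \<Rightarrow> real \<Rightarrow> real" where
  "perturbation \<tau> d \<rho> s = \<tau> * d s + direction_comb \<rho> s"

definition directions_L1_norm :: real where
  "directions_L1_norm = L1_norm L \<psi>1 + L1_norm L \<psi>2 + L1_norm L \<psi>3"

definition directions_energy :: real where
  "directions_energy = (LINT s:{0..L}|lborel. (\<psi>1 s)\<^sup>2) + (LINT s:{0..L}|lborel. (\<psi>2 s)\<^sup>2)
    + (LINT s:{0..L}|lborel. (\<psi>3 s)\<^sup>2)"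

lemma directions_L1_norm_nonneg: "0 \<le> directions_L1_norm"
  by (simp add: directions_L1_norm_def L1_norm_nonneg add_nonneg_nonneg)

lemma directions_energy_nonneg: "0 \<le> directions_energy"
  by (simp add: directions_energy_def set_integral_square_nonneg add_nonneg_nonneg)

lemma sq_integrable_perturbation: "sq_integrable L d \<Longrightarrow> sq_integrable L (perturbation \<tau> d \<rho>)"
  unfolding perturbation_def[abs_def] by (intro sq_integrable_add sq_integrable_cmult sq_integrable_direction_comb)

lemma L1_norm_direction_comb_le: "L1_norm L (direction_comb \<rho>) \<le> norm \<rho> * directions_L1_norm"
proof -
  obtain r1 r2 r3 where \<rho>: "\<rho> = (r1, r2, r3)" by (cases \<rho>)
  have "L1_norm L (direction_comb \<rho>) \<le> L1_norm L (\<lambda>t. r1 * \<psi>1 t) + L1_norm L (\<lambda>t. r2 * \<psi>2 t) + L1_norm L (\<lambda>t. r3 * \<psi>3 t)"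
    unfolding direction_comb_def \<rho> fst_conv snd_conv
    by (rule order_trans[OF L1_norm_add]) (auto intro!: set_integral_add L1_norm_add simp: set_integrable_directions)
  also have "\<dots> = \<bar>r1\<bar> * L1_norm L \<psi>1 + \<bar>r2\<bar> * L1_norm L \<psi>2 + \<bar>r3\<bar> * L1_norm L \<psi>3" by (simp add: L1_norm_cmult)
  also have "\<dots> \<le> norm \<rho> * L1_norm L \<psi>1 + norm \<rho> * L1_norm L \<psi>2 + norm \<rho> * L1_norm L \<psi>3"
    unfolding \<rho> using abs_le_norm_triple[where a=r1 and b=r2 and c=r3] L1_norm_nonneg
    by (intro add_mono mult_right_mono) auto
  finally show ?thesis by (simp add: directions_L1_norm_def algebra_simps)
qed

lemma L1_norm_perturbation_le:
  assumes "set_integrable lborel {0..L} d" "0 \<le> \<tau>"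
  shows "L1_norm L (perturbation \<tau> d \<rho>) \<le> \<tau> * L1_norm L d + norm \<rho> * directions_L1_norm"
proof -
  have "L1_norm L (perturbation \<tau> d \<rho>) \<le> L1_norm L (\<lambda>s. \<tau> * d s) + L1_norm L (direction_comb \<rho>)"
    unfolding perturbation_def
    by (rule L1_norm_add) (use assms sq_integrable_imp_set_integrable[OF sq_integrable_direction_comb] in auto)
  then show ?thesis using L1_norm_direction_comb_le[of \<rho>] assms(2) by (simp add: L1_norm_cmult)
qed

lemma energy_perturbation_le:
  assumes d: "sq_integrable L d" and "0 < \<tau>" and small: "norm \<rho> \<le> \<tau> * R"
  shows "(LINT s:{0..L}|lborel. (perturbation \<tau> d \<rho> s)\<^sup>2)
    \<le> \<tau>\<^sup>2 * (4 * ((LINT s:{0..L}|lborel. (d s)\<^sup>2) + R\<^sup>2 * directions_energy))"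
proof -
  obtain r1 r2 r3 where \<rho>: "\<rho> = (r1, r2, r3)" by (cases \<rho>)
  note square = sq_integrable_square[OF d] sq_integrable_square[OF sq_integrable_directions(1)]
    sq_integrable_square[OF sq_integrable_directions(2)] sq_integrable_square[OF sq_integrable_directions(3)]
  have "(LINT s:{0..L}|lborel. (perturbation \<tau> d \<rho> s)\<^sup>2)
      \<le> (LINT s:{0..L}|lborel. 4 * (\<tau>\<^sup>2 * (d s)\<^sup>2 + r1\<^sup>2 * (\<psi>1 s)\<^sup>2 + r2\<^sup>2 * (\<psi>2 s)\<^sup>2 + r3\<^sup>2 * (\<psi>3 s)\<^sup>2))"
  proof (rule set_integral_mono)
    show "set_integrable lborel {0..L} (\<lambda>s. (perturbation \<tau> d \<rho> s)\<^sup>2)"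
      by (rule sq_integrable_square[OF sq_integrable_perturbation[OF d]])
    show "set_integrable lborel {0..L} (\<lambda>s. 4 * (\<tau>\<^sup>2 * (d s)\<^sup>2 + r1\<^sup>2 * (\<psi>1 s)\<^sup>2 + r2\<^sup>2 * (\<psi>2 s)\<^sup>2 + r3\<^sup>2 * (\<psi>3 s)\<^sup>2))"
      using square by (intro set_integrable_mult_right set_integral_add) auto
    fix s
    \<comment> \<open>\<open>(a + b + c + e)\<^sup>2 \<le> 4 (a\<^sup>2 + b\<^sup>2 + c\<^sup>2 + e\<^sup>2)\<close>, from the six squares of pairwise differences\<close>
    have "0 \<le> (\<tau> * d s - r1 * \<psi>1 s)\<^sup>2 + (\<tau> * d s - r2 * \<psi>2 s)\<^sup>2 + (\<tau> * d s - r3 * \<psi>3 s)\<^sup>2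
        + (r1 * \<psi>1 s - r2 * \<psi>2 s)\<^sup>2 + (r1 * \<psi>1 s - r3 * \<psi>3 s)\<^sup>2 + (r2 * \<psi>2 s - r3 * \<psi>3 s)\<^sup>2"
      by simp
    then show "(perturbation \<tau> d \<rho> s)\<^sup>2 \<le> 4 * (\<tau>\<^sup>2 * (d s)\<^sup>2 + r1\<^sup>2 * (\<psi>1 s)\<^sup>2 + r2\<^sup>2 * (\<psi>2 s)\<^sup>2 + r3\<^sup>2 * (\<psi>3 s)\<^sup>2)"
      by (simp add: perturbation_def direction_comb_def \<rho> power2_eq_square algebra_simps)
  qed
  also have "\<dots> = 4 * (\<tau>\<^sup>2 * (LINT s:{0..L}|lborel. (d s)\<^sup>2) + r1\<^sup>2 * (LINT s:{0..L}|lborel. (\<psi>1 s)\<^sup>2)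
      + r2\<^sup>2 * (LINT s:{0..L}|lborel. (\<psi>2 s)\<^sup>2) + r3\<^sup>2 * (LINT s:{0..L}|lborel. (\<psi>3 s)\<^sup>2))"
    using square by (simp add: set_integrable_mult_right)
  also have "\<dots> \<le> 4 * (\<tau>\<^sup>2 * (LINT s:{0..L}|lborel. (d s)\<^sup>2) + (norm \<rho>)\<^sup>2 * directions_energy)"
  proof -
    have "r\<^sup>2 * E \<le> (norm \<rho>)\<^sup>2 * E" if "\<bar>r\<bar> \<le> norm \<rho>" "0 \<le> E" for r E
      using that by (intro mult_right_mono) (auto simp: abs_le_square_iff[symmetric])
    from this[OF _ set_integral_square_nonneg] abs_le_norm_triple[where a=r1 and b=r2 and c=r3]
    have "r1\<^sup>2 * (LINT s:{0..L}|lborel. (\<psi>1 s)\<^sup>2) + r2\<^sup>2 * (LINT s:{0..L}|lborel. (\<psi>2 s)\<^sup>2)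
        + r3\<^sup>2 * (LINT s:{0..L}|lborel. (\<psi>3 s)\<^sup>2) \<le> (norm \<rho>)\<^sup>2 * directions_energy"
      unfolding directions_energy_def \<rho> by (simp add: distrib_left add_mono)
    then show ?thesis by simp
  qed
  also have "\<dots> \<le> \<tau>\<^sup>2 * (4 * ((LINT s:{0..L}|lborel. (d s)\<^sup>2) + R\<^sup>2 * directions_energy))"
  proof -
    have "(norm \<rho>)\<^sup>2 \<le> (\<tau> * R)\<^sup>2" using small by (intro power_mono) auto
    then have "(norm \<rho>)\<^sup>2 * directions_energy \<le> \<tau>\<^sup>2 * (R\<^sup>2 * directions_energy)"
      using directions_energy_nonneg by (simp add: mult_right_mono power_mult_distrib mult.assoc[symmetric])
    then show ?thesis by (simp add: algebra_simps)
  qed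
  finally show ?thesis .
qed

lemma perturbation_nonneg:
  assumes d: "AE s in lborel. s \<in> {0..L} \<longrightarrow> 0 \<le> g s + d s"
    and "0 \<le> \<tau>" and small: "\<tau> + 3 * norm \<rho> \<le> 1"
  shows "AE s in lborel. s \<in> {0..L} \<longrightarrow> 0 \<le> g s + perturbation \<tau> d \<rho> s"
  using g_nonneg d
proof eventually_elim
  case (elim s)
  obtain r1 r2 r3 where \<rho>: "\<rho> = (r1, r2, r3)" by (cases \<rho>)
  show ?case
  proof
    assume s: "s \<in> {0..L}"
    have "\<bar>r * \<psi> s\<bar> \<le> \<bar>r\<bar> * g s" if "\<bar>\<psi> s\<bar> \<le> \<bar>g s\<bar>" for r \<psi>
      using that elim s by (simp add: abs_mult mult_left_mono)
    from this[of \<psi>1 r1, OF directions_le_g(1)] this[of \<psi>2 r2, OF directions_le_g(2)]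
      this[of \<psi>3 r3, OF directions_le_g(3)]
    have "- ((\<bar>r1\<bar> + \<bar>r2\<bar> + \<bar>r3\<bar>) * g s) \<le> direction_comb \<rho> s"
      by (simp add: direction_comb_def \<rho> algebra_simps)
    moreover have "(\<bar>r1\<bar> + \<bar>r2\<bar> + \<bar>r3\<bar>) * g s \<le> (1 - \<tau>) * g s"
      using abs_le_norm_triple[where a=r1 and b=r2 and c=r3] small elim s \<rho> by (intro mult_right_mono) auto
    moreover have "0 \<le> \<tau> * (g s + d s)" using \<open>0 \<le> \<tau>\<close> elim s by simp
    ultimately show "0 \<le> g s + perturbation \<tau> d \<rho> s"
      by (simp add: perturbation_def algebra_simps)
  qed
qed

lemma constraint_deriv_perturbation:
  assumes "sq_integrable L d"
  shows "constraint_deriv L g (perturbation \<tau> d \<rho>) = \<tau> *\<^sub>R constraint_deriv L g d + deriv_comb \<rho>"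
proof -
  have "constraint_deriv L g (perturbation \<tau> d \<rho>)
      = constraint_deriv L g (\<lambda>s. \<tau> * d s) + constraint_deriv L g (direction_comb \<rho>)"
    unfolding perturbation_def[abs_def] using sq_integrable_imp_set_integrable assms sq_integrable_direction_comb
    by (intro constraint_deriv_add[OF set_integrable_g]) auto
  then show ?thesis by (simp add: constraint_deriv_cmult constraint_deriv_direction_comb)
qed

lemma perturbation_remainder_le:
  assumes d: "sq_integrable L d" and "0 \<le> \<tau>" and \<rho>: "norm \<rho> \<le> \<tau> * R"
  shows "norm (constraint L (\<lambda>s. g s + perturbation \<tau> d \<rho> s) - constraint L g - constraint_deriv L g (perturbation \<tau> d \<rho>))
    \<le> 2 * L * (\<tau> * (L1_norm L d + R * directions_L1_norm))\<^sup>2"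
proof -
  have "L1_norm L (perturbation \<tau> d \<rho>) \<le> \<tau> * (L1_norm L d + R * directions_L1_norm)"
    using L1_norm_perturbation_le[OF sq_integrable_imp_set_integrable[OF d] \<open>0 \<le> \<tau>\<close>, of \<rho>]
      mult_right_mono[OF \<rho> directions_L1_norm_nonneg] by (simp add: algebra_simps)
  then have "(L1_norm L (perturbation \<tau> d \<rho>))\<^sup>2 \<le> (\<tau> * (L1_norm L d + R * directions_L1_norm))\<^sup>2"
    using L1_norm_nonneg by (intro power_mono) auto
  moreover have "norm (constraint L (\<lambda>s. g s + perturbation \<tau> d \<rho> s) - constraint L g - constraint_deriv L g (perturbation \<tau> d \<rho>))
      \<le> 2 * L * (L1_norm L (perturbation \<tau> d \<rho>))\<^sup>2"
    using L_pos by (intro constraint_remainder_le set_integrable_g sq_integrable_imp_set_integrable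
        sq_integrable_perturbation d) simp
  ultimately show ?thesis using L_pos by (smt (verit) mult_left_mono)
qed

lemma constraint_perturbation_lipschitz:
  assumes d: "sq_integrable L d"
  shows "norm (constraint L (\<lambda>s. g s + perturbation \<tau> d x s) - constraint L (\<lambda>s. g s + perturbation \<tau> d y s))
    \<le> (1 + 2 * L) * directions_L1_norm * dist x y"
proof -
  have "L1_norm L (\<lambda>s. (g s + perturbation \<tau> d x s) - (g s + perturbation \<tau> d y s)) = L1_norm L (direction_comb (x - y))"
    unfolding L1_norm_def perturbation_def direction_comb_def
    by (rule set_lebesgue_integral_cong) (auto simp: algebra_simps)
  then have "norm (constraint L (\<lambda>s. g s + perturbation \<tau> d x s) - constraint L (\<lambda>s. g s + perturbation \<tau> d y s))
      \<le> (1 + 2 * L) * L1_norm L (direction_comb (x - y))"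
    using constraint_lipschitz[of L "\<lambda>s. g s + perturbation \<tau> d x s" "\<lambda>s. g s + perturbation \<tau> d y s"] L_pos
    by (simp add: set_integral_add set_integrable_g sq_integrable_imp_set_integrable[OF sq_integrable_perturbation[OF d]])
  also have "\<dots> \<le> (1 + 2 * L) * (norm (x - y) * directions_L1_norm)"
    using L1_norm_direction_comb_le[of "x - y"] L_pos by (intro mult_left_mono) auto
  finally show ?thesis by (simp add: dist_norm mult_ac)
qed

definition correction_map :: "real \<Rightarrow> (real \<Rightarrow> real) \<Rightarrow> v3 \<Rightarrow> v3" where
  "correction_map \<tau> d \<rho> = inv deriv_comb (constraint L (\<lambda>s. g s + perturbation \<tau> d \<rho> s) - constraint L g)"

lemma continuous_on_correction_map:
  assumes d: "sq_integrable L d"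
  shows "continuous_on S (correction_map \<tau> d)"
proof -
  obtain Km where Km: "0 < Km" "\<And>x. norm (inv deriv_comb x) \<le> Km * norm x"
    using linear_bounded_pos[OF linear_inv_deriv_comb] by blast
  have "(Km * (1 + 2 * L) * directions_L1_norm)-lipschitz_on S (correction_map \<tau> d)"
  proof (rule lipschitz_onI)
    fix x y
    have "norm (correction_map \<tau> d x - correction_map \<tau> d y) \<le> Km * norm (constraint L (\<lambda>s. g s + perturbation \<tau> d x s)
        - constraint L (\<lambda>s. g s + perturbation \<tau> d y s))"
      unfolding correction_map_def linear_diff[OF linear_inv_deriv_comb, symmetric] using Km(2) by simp
    also have "\<dots> \<le> Km * ((1 + 2 * L) * directions_L1_norm * dist x y)"
      using constraint_perturbation_lipschitz[OF d] Km(1) by (intro mult_left_mono) auto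
    finally show "dist (correction_map \<tau> d x) (correction_map \<tau> d y) \<le> Km * (1 + 2 * L) * directions_L1_norm * dist x y"
      by (simp add: dist_norm mult.assoc)
  qed (use Km L_pos directions_L1_norm_nonneg in simp)
  then show ?thesis by (rule lipschitz_on_continuous_on)
qed

lemma correction_map_eq:
  assumes "sq_integrable L d"
  shows "correction_map \<tau> d \<rho> = \<tau> *\<^sub>R inv deriv_comb (constraint_deriv L g d) + \<rho>
    + inv deriv_comb (constraint L (\<lambda>s. g s + perturbation \<tau> d \<rho> s) - constraint L g
      - constraint_deriv L g (perturbation \<tau> d \<rho>))"
  unfolding correction_map_def constraint_deriv_perturbation[OF assms]
  by (simp add: linear_add[OF linear_inv_deriv_comb] linear_diff[OF linear_inv_deriv_comb]
      linear_scale[OF linear_inv_deriv_comb] inv_f_f[OF inj_deriv_comb])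

text \<open>The constraint can be restored after a perturbation of size \<open>\<tau>\<close> by a correction of
  size \<open>O(\<tau>)\<close> along the directions \<open>\<psi>\<^sub>i\<close>: the correction is a zero of \<open>correction_map\<close>,
  which differs from a translation by \<open>O(\<tau>\<^sup>2)\<close>.\<close>
lemma constraint_correction:
  assumes d: "sq_integrable L d"
  defines "c \<equiv> inv deriv_comb (constraint_deriv L g d)"
  obtains K where "0 < K" "\<And>\<tau>. 0 < \<tau> \<Longrightarrow> \<tau> * K \<le> 1 \<Longrightarrow>
    \<exists>\<rho>. norm \<rho> \<le> \<tau> * (norm c + 1) \<and> constraint L (\<lambda>s. g s + perturbation \<tau> d \<rho> s) = constraint L g"
proof -
  obtain Km where Km: "0 < Km" "\<And>x. norm (inv deriv_comb x) \<le> Km * norm x"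
    using linear_bounded_pos[OF linear_inv_deriv_comb] by blast
  define A where "A = L1_norm L d + (norm c + 1) * directions_L1_norm"
  define K where "K = Km * (2 * L) * A\<^sup>2 + 1"
  have "0 \<le> Km * (2 * L) * A\<^sup>2" using Km L_pos by simp
  then have "0 < K" by (simp add: K_def)
  moreover have "\<exists>\<rho>. norm \<rho> \<le> \<tau> * (norm c + 1) \<and> constraint L (\<lambda>s. g s + perturbation \<tau> d \<rho> s) = constraint L g"
    if \<tau>: "0 < \<tau>" "\<tau> * K \<le> 1" for \<tau>
  proof -
    define r where "r = K * \<tau>\<^sup>2"
    have "0 < r" using \<open>0 < K\<close> \<tau> by (simp add: r_def)
    have "r \<le> \<tau>" using mult_right_mono[OF \<tau>(2), of \<tau>] \<tau>(1) by (simp add: r_def power2_eq_square mult_ac)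
    have ball: "norm \<rho> \<le> \<tau> * (norm c + 1)" if "\<rho> \<in> cball (- (\<tau> *\<^sub>R c)) r" for \<rho>
      using that norm_triangle_ineq4[of "\<rho> + \<tau> *\<^sub>R c" "\<tau> *\<^sub>R c"] \<open>r \<le> \<tau>\<close> \<tau>(1)
      by (simp add: dist_norm norm_minus_commute algebra_simps)
    obtain \<rho> where \<rho>: "\<rho> \<in> cball (- (\<tau> *\<^sub>R c)) r" "correction_map \<tau> d \<rho> = 0"
    proof (rule brouwer_zero_near_translation[OF continuous_on_correction_map[OF d] \<open>0 < r\<close>])
      fix y assume y: "y \<in> cball (- (\<tau> *\<^sub>R c)) r"
      define R where "R = constraint L (\<lambda>s. g s + perturbation \<tau> d y s) - constraint L g
        - constraint_deriv L g (perturbation \<tau> d y)"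
      have "norm (correction_map \<tau> d y - (\<tau> *\<^sub>R c + y)) = norm (inv deriv_comb R)"
        by (simp add: correction_map_eq[OF d] c_def R_def)
      also have "\<dots> \<le> Km * norm R" by (rule Km(2))
      also have "\<dots> \<le> Km * (2 * L * (\<tau> * A)\<^sup>2)"
        using perturbation_remainder_le[OF d _ ball[OF y]] \<tau>(1) Km(1)
        unfolding R_def A_def by (intro mult_left_mono) auto
      also have "\<dots> \<le> Km * (2 * L * (\<tau> * A)\<^sup>2) + \<tau>\<^sup>2" by simp
      also have "\<dots> = r" by (simp add: r_def K_def power_mult_distrib algebra_simps)
      finally show "norm (correction_map \<tau> d y - (\<tau> *\<^sub>R c + y)) \<le> r" .
    qed
    have "constraint L (\<lambda>s. g s + perturbation \<tau> d \<rho> s) - constraint L g = deriv_comb (correction_map \<tau> d \<rho>)"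
      by (simp add: correction_map_def deriv_comb_inv)
    then have "constraint L (\<lambda>s. g s + perturbation \<tau> d \<rho> s) = constraint L g"
      using \<rho>(2) linear_0[OF linear_deriv_comb] by simp
    with ball[OF \<rho>(1)] show ?thesis by blast
  qed
  ultimately show ?thesis using that by blast
qed

lemma pairing_perturbation:
  assumes d: "sq_integrable L d"
  shows "(LINT s:{0..L}|lborel. g s * perturbation \<tau> d \<rho> s)
    = \<tau> * (LINT s:{0..L}|lborel. g s * d s) + multiplier \<bullet> deriv_comb \<rho>"
proof -
  have "(LINT s:{0..L}|lborel. g s * perturbation \<tau> d \<rho> s)
      = (LINT s:{0..L}|lborel. \<tau> * (g s * d s) + g s * direction_comb \<rho> s)"
    unfolding perturbation_def by (rule set_lebesgue_integral_cong) (auto simp: algebra_simps)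
  then show ?thesis
    using sq_integrable_imp_set_integrable_mult[OF sq_integrable_g d]
      sq_integrable_imp_set_integrable_mult[OF sq_integrable_g sq_integrable_direction_comb]
    by (simp add: inner_multiplier_deriv_comb pairing_comb_def)
qed

lemma pairing_perturbation_le:
  assumes d: "sq_integrable L d" and "0 < \<tau>" and \<rho>: "norm \<rho> \<le> \<tau> * R"
    and same: "constraint L (\<lambda>s. g s + perturbation \<tau> d \<rho> s) = constraint L g"
  shows "(LINT s:{0..L}|lborel. g s * perturbation \<tau> d \<rho> s)
    \<le> \<tau> * ((LINT s:{0..L}|lborel. g s * d s) - multiplier \<bullet> constraint_deriv L g d)
      + \<tau>\<^sup>2 * (2 * L * norm multiplier * (L1_norm L d + R * directions_L1_norm)\<^sup>2)"
proof -
  define R' where "R' = constraint L (\<lambda>s. g s + perturbation \<tau> d \<rho> s) - constraint L g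
    - constraint_deriv L g (perturbation \<tau> d \<rho>)"
  have "norm R' \<le> 2 * L * (\<tau> * (L1_norm L d + R * directions_L1_norm))\<^sup>2"
    using perturbation_remainder_le[OF d _ \<rho>] \<open>0 < \<tau>\<close> unfolding R'_def by simp
  then have "norm multiplier * norm R' \<le> norm multiplier * (2 * L * (\<tau> * (L1_norm L d + R * directions_L1_norm))\<^sup>2)"
    by (rule mult_left_mono) simp
  then have "\<bar>multiplier \<bullet> R'\<bar> \<le> \<tau>\<^sup>2 * (2 * L * norm multiplier * (L1_norm L d + R * directions_L1_norm)\<^sup>2)"
    using Cauchy_Schwarz_ineq2[of multiplier R'] by (simp add: power_mult_distrib mult_ac)
  moreover have "deriv_comb \<rho> = - R' - \<tau> *\<^sub>R constraint_deriv L g d"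
    using same by (simp add: R'_def constraint_deriv_perturbation[OF d])
  then have "(LINT s:{0..L}|lborel. g s * perturbation \<tau> d \<rho> s)
      = \<tau> * ((LINT s:{0..L}|lborel. g s * d s) - multiplier \<bullet> constraint_deriv L g d) - multiplier \<bullet> R'"
    unfolding pairing_perturbation[OF d] by (simp only: inner_diff_right inner_minus_right inner_scaleR_right) (simp add: right_diff_distrib)
  ultimately show ?thesis by linarith
qed

text \<open>First-order optimality: a perturbation \<open>\<tau> d\<close> corrected back onto the constraint changes
  the energy by \<open>2 \<tau> (\<integral>g d - multiplier \<bullet> DG d) + O(\<tau>\<^sup>2)\<close>, which must be nonnegative.\<close>
lemma first_order_condition:
  assumes d: "sq_integrable L d" and d_admissible: "AE s in lborel. s \<in> {0..L} \<longrightarrow> 0 \<le> g s + d s"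
  shows "multiplier \<bullet> constraint_deriv L g d \<le> (LINT s:{0..L}|lborel. g s * d s)"
proof (rule ccontr)
  define \<eta> where "\<eta> = multiplier \<bullet> constraint_deriv L g d - (LINT s:{0..L}|lborel. g s * d s)"
  assume "\<not> ?thesis"
  then have "0 < \<eta>" by (simp add: \<eta>_def)
  define c where "c = inv deriv_comb (constraint_deriv L g d)"
  obtain K where K: "0 < K" "\<And>\<tau>. 0 < \<tau> \<Longrightarrow> \<tau> * K \<le> 1 \<Longrightarrow>
      \<exists>\<rho>. norm \<rho> \<le> \<tau> * (norm c + 1) \<and> constraint L (\<lambda>s. g s + perturbation \<tau> d \<rho> s) = constraint L g"
    using constraint_correction[OF d] unfolding c_def by blast
  define A where "A = L1_norm L d + (norm c + 1) * directions_L1_norm"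
  define E where "E = (LINT s:{0..L}|lborel. (d s)\<^sup>2) + (norm c + 1)\<^sup>2 * directions_energy"
  define B where "B = 4 * L * norm multiplier * A\<^sup>2 + 4 * E"
  have "0 \<le> B"
    using L_pos directions_energy_nonneg by (simp add: B_def E_def set_integral_square_nonneg)
  define \<tau> where "\<tau> = min (1 / K) (min (1 / (4 + 3 * norm c)) (\<eta> / (B + 1)))"
  have "0 < \<tau>" using K(1) \<open>0 < \<eta>\<close> \<open>0 \<le> B\<close> by (simp add: \<tau>_def add_pos_nonneg)
  have "\<tau> \<le> 1 / K" "\<tau> \<le> 1 / (4 + 3 * norm c)" "\<tau> \<le> \<eta> / (B + 1)" by (simp_all add: \<tau>_def)
  then have "\<tau> * K \<le> 1" "\<tau> * (4 + 3 * norm c) \<le> 1" "\<tau> * (B + 1) \<le> \<eta>"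
    using K(1) \<open>0 \<le> B\<close> by (simp_all add: le_divide_eq add_pos_nonneg)
  then obtain \<rho> where \<rho>: "norm \<rho> \<le> \<tau> * (norm c + 1)"
    and same: "constraint L (\<lambda>s. g s + perturbation \<tau> d \<rho> s) = constraint L g"
    using K(2)[OF \<open>0 < \<tau>\<close>] by blast
  have pairing: "(LINT s:{0..L}|lborel. g s * perturbation \<tau> d \<rho> s)
      \<le> - \<tau> * \<eta> + \<tau>\<^sup>2 * (2 * L * norm multiplier * A\<^sup>2)"
    using pairing_perturbation_le[OF d \<open>0 < \<tau>\<close> \<rho> same] by (simp add: \<eta>_def A_def algebra_simps)
  have energy: "(LINT s:{0..L}|lborel. (perturbation \<tau> d \<rho> s)\<^sup>2) \<le> \<tau>\<^sup>2 * (4 * E)"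
    using energy_perturbation_le[OF d \<open>0 < \<tau>\<close> \<rho>] by (simp add: E_def)
  have admissible: "AE s in lborel. s \<in> {0..L} \<longrightarrow> 0 \<le> g s + perturbation \<tau> d \<rho> s"
    using \<open>\<tau> * (4 + 3 * norm c) \<le> 1\<close> \<rho> \<open>0 < \<tau>\<close>
    by (intro perturbation_nonneg[OF d_admissible]) (auto simp: algebra_simps)
  have "(LINT s:{0..L}|lborel. (g s)\<^sup>2) \<le> (LINT s:{0..L}|lborel. (g s + perturbation \<tau> d \<rho> s)\<^sup>2)"
    by (rule minimal[OF sq_integrable_add[OF sq_integrable_g sq_integrable_perturbation[OF d]] admissible same])
  also have "\<dots> \<le> (LINT s:{0..L}|lborel. (g s)\<^sup>2) - 2 * \<tau> * \<eta> + \<tau>\<^sup>2 * B"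
    using pairing energy
    by (simp add: set_integral_square_add[OF sq_integrable_g sq_integrable_perturbation[OF d]] B_def algebra_simps)
  finally have "2 * \<eta> \<le> \<tau> * B" using \<open>0 < \<tau>\<close> by (simp add: power2_eq_square algebra_simps)
  then show False using \<open>\<tau> * (B + 1) \<le> \<eta>\<close> \<open>0 < \<tau>\<close> \<open>0 < \<eta>\<close> by (simp add: algebra_simps)
qed

end

section \<open>The Euler--Lagrange equation\<close>

lemma positive_part_deviation_le:
  fixes u v :: real
  assumes "0 \<le> u"
  shows "(max v 0 - u) * (u - v) \<le> - (u - max v 0)\<^sup>2"
proof (cases "0 \<le> v")
  case False
  then have "u * v \<le> 0" using assms by (simp add: mult_nonneg_nonpos)
  with False show ?thesis by (simp add: power2_eq_square algebra_simps)
qed (simp add: power2_eq_square algebra_simps)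

lemma AE_zero_of_set_integral_square_le_zero:
  fixes f :: "real \<Rightarrow> real"
  assumes "set_integrable lborel A (\<lambda>s. (f s)\<^sup>2)" "(LINT s:A|lborel. (f s)\<^sup>2) \<le> 0"
  shows "AE s in lborel. s \<in> A \<longrightarrow> f s = 0"
proof -
  have "0 \<le> (LINT s:A|lborel. (f s)\<^sup>2)"
    unfolding set_lebesgue_integral_def by (rule integral_nonneg_AE) auto
  then have "(LINT s:A|lborel. (f s)\<^sup>2) = 0" using assms(2) by linarith
  then have "(\<integral>s. indicator A s * (f s)\<^sup>2 \<partial>lborel) = 0"
    by (simp add: set_lebesgue_integral_def)
  then have "AE s in lborel. indicator A s * (f s)\<^sup>2 = 0"
    using integral_nonneg_eq_0_iff_AE[where f="\<lambda>s. indicator A s * (f s)\<^sup>2"] assms(1)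
    by (simp add: set_integrable_def)
  then show ?thesis by eventually_elim (auto simp: indicator_def)
qed

context spanning_variations
begin

text \<open>Test the first-order condition with \<open>d = (lagrange_fun c1 c2 c3)\<^sup>+ - g\<close>.\<close>
lemma euler_lagrange_ae:
  assumes "multiplier = (c1, c2, c3)"
  shows "AE s in lborel. s \<in> {0..L} \<longrightarrow> g s = max (lagrange_fun c1 c2 c3 s) 0"
proof -
  define p where "p = lagrange_fun c1 c2 c3"
  have p: "continuous_on {0..L} p" unfolding p_def by (rule continuous_on_lagrange_fun)
  define d where "d t = indicator {0..L} t * max (p t) 0 - g t" for t
  have d: "sq_integrable L d"
    unfolding d_def[abs_def] using p by (intro sq_integrable_diff sq_integrable_continuous sq_integrable_g continuous_intros)
  have dev: "set_integrable lborel {0..L} (\<lambda>t. (g t - max (p t) 0)\<^sup>2)"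
    using sq_integrable_square[OF d] by (rule set_integrable_cong[THEN iffD1, rotated -1]) (auto simp: d_def power2_commute)
  have dp: "set_integrable lborel {0..L} (\<lambda>t. d t * p t)" by (rule set_integrable_mult_continuous[OF d p])
  have gd: "set_integrable lborel {0..L} (\<lambda>t. g t * d t)"
    by (rule sq_integrable_imp_set_integrable_mult[OF sq_integrable_g d])
  have "(LINT t:{0..L}|lborel. d t * p t) \<le> (LINT t:{0..L}|lborel. g t * d t)"
    using first_order_condition[OF d] inner_constraint_deriv[OF d] assms by (simp add: d_def p_def)
  then have "0 \<le> (LINT t:{0..L}|lborel. d t * (g t - p t))"
    using dp gd by (simp add: right_diff_distrib mult.commute)
  also have "\<dots> \<le> (LINT t:{0..L}|lborel. - (g t - max (p t) 0)\<^sup>2)"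
  proof (rule set_integral_mono_AE)
    show "set_integrable lborel {0..L} (\<lambda>t. d t * (g t - p t))"
      using dp gd by (simp add: right_diff_distrib mult.commute)
    show "set_integrable lborel {0..L} (\<lambda>t. - (g t - max (p t) 0)\<^sup>2)"
      using set_integrable_mult_right[OF dev, of "-1"] by simp
    show "AE t\<in>{0..L} in lborel. d t * (g t - p t) \<le> - (g t - max (p t) 0)\<^sup>2"
      using g_nonneg by eventually_elim (auto simp: d_def intro: positive_part_deviation_le)
  qed
  finally have "(LINT t:{0..L}|lborel. (g t - max (p t) 0)\<^sup>2) \<le> 0"
    using set_integral_uminus[OF dev] by simp
  from AE_zero_of_set_integral_square_le_zero[OF dev this] show ?thesis
    by (simp add: p_def)
qed

end

context fixed_length_minimizer
begin

lemma exists_lagrange_multipliers: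
  "\<exists>c1 c2 c3. AE s in lborel. s \<in> {0..L} \<longrightarrow> g s = max (lagrange_fun c1 c2 c3 s) 0"
proof -
  obtain a1 b1 a2 b2 a3 b3 where independent: "\<And>r1 r2 r3. r1 *\<^sub>R constraint_deriv L g (local_variation a1 b1)
      + r2 *\<^sub>R constraint_deriv L g (local_variation a2 b2)
      + r3 *\<^sub>R constraint_deriv L g (local_variation a3 b3) = 0 \<Longrightarrow> r1 = 0 \<and> r2 = 0 \<and> r3 = 0"
    using exists_independent_local_variations by blast
  interpret spanning_variations L g "local_variation a1 b1" "local_variation a2 b2" "local_variation a3 b3"
    by unfold_locales (use sq_integrable_local_variation abs_local_variation_le independent in auto)
  show ?thesis using euler_lagrange_ae[of "fst multiplier" "fst (snd multiplier)" "snd (snd multiplier)"] by auto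
qed

lemma lipschitz_positive_part_lagrange_fun:
  "(\<bar>c2\<bar> + \<bar>c3\<bar>)-lipschitz_on {0..L} (\<lambda>s. max (lagrange_fun c1 c2 c3 s) 0)"
proof (rule lipschitz_onI)
  fix s t assume s: "s \<in> {0..L}" and t: "t \<in> {0..L}"
  have sin: "\<bar>tail_integral L sin g s - tail_integral L sin g t\<bar> \<le> \<bar>s - t\<bar>"
    by (rule abs_tail_integral_diff_le[OF set_integrable_g _ _ s t]) (auto intro: continuous_intros)
  have cos: "\<bar>tail_integral L cos g s - tail_integral L cos g t\<bar> \<le> \<bar>s - t\<bar>"
    by (rule abs_tail_integral_diff_le[OF set_integrable_g _ _ s t]) (auto intro: continuous_intros)
  have "\<bar>max (lagrange_fun c1 c2 c3 s) 0 - max (lagrange_fun c1 c2 c3 t) 0\<bar>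
      \<le> \<bar>c2 * (tail_integral L sin g s - tail_integral L sin g t)\<bar> + \<bar>c3 * (tail_integral L cos g s - tail_integral L cos g t)\<bar>"
    by (simp add: lagrange_fun_def algebra_simps)
  also have "\<dots> \<le> \<bar>c2\<bar> * \<bar>s - t\<bar> + \<bar>c3\<bar> * \<bar>s - t\<bar>"
    unfolding abs_mult using sin cos by (intro add_mono mult_left_mono) auto
  finally show "dist (max (lagrange_fun c1 c2 c3 s) 0) (max (lagrange_fun c1 c2 c3 t) 0) \<le> (\<bar>c2\<bar> + \<bar>c3\<bar>) * dist s t"
    by (simp add: dist_real_def algebra_simps)
qed simp

lemma lagrange_fun_eq_primitives:
  assumes "s \<in> {0..L}"
  shows "lagrange_fun c1 c2 c3 s = c1 - c2 * (primitive (\<lambda>u. sin (primitive g u)) L - primitive (\<lambda>u. sin (primitive g u)) s)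
    + c3 * (primitive (\<lambda>u. cos (primitive g u)) L - primitive (\<lambda>u. cos (primitive g u)) s)"
  using tail_integral_eq[OF set_integrable_g continuous_on_sin[OF continuous_on_id] assms]
    tail_integral_eq[OF set_integrable_g continuous_on_cos[OF continuous_on_id] assms]
  by (simp add: lagrange_fun_def)

lemma has_real_derivative_primitive_g:
  assumes el: "AE s in lborel. s \<in> {0..L} \<longrightarrow> g s = max (lagrange_fun c1 c2 c3 s) 0" and s: "s \<in> {0..L}"
  shows "(primitive g has_real_derivative max (lagrange_fun c1 c2 c3 s) 0) (at s within {0..L})"
proof -
  define h where "h t = max (lagrange_fun c1 c2 c3 t) 0" for t
  have h: "continuous_on {0..L} h" unfolding h_def by (intro continuous_intros continuous_on_lagrange_fun)
  have eq: "primitive g t = primitive h t" if "t \<in> {0..L}" for t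
  proof -
    have "primitive g t = primitive (\<lambda>u. indicator {0..L} u * h u) t"
      using borel_measurable_continuous_on_indicator[OF _ h] el that sq_integrable_measurable[OF sq_integrable_g]
      by (intro primitive_cong_AE) (auto simp: h_def elim!: AE_mp)
    also have "\<dots> = primitive h t"
      unfolding primitive_def by (rule set_lebesgue_integral_cong) (use that in auto)
    finally show ?thesis .
  qed
  have "(primitive h has_real_derivative h s) (at s within {0..L})" by (rule has_real_derivative_primitive[OF h s])
  then have "(primitive g has_real_derivative h s) (at s within {0..L})"
    by (rule has_field_derivative_transform_within[where d=1]) (use eq s in auto)
  then show ?thesis by (simp add: h_def)
qed

end

section \<open>Minimizers of the elastic-arc problem\<close>

lemma admissible_imp_constraint:
  assumes "admissible \<alpha> L \<theta> g" "0 \<le> L"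
  shows "sq_integrable L g" "AE s in lborel. s \<in> {0..L} \<longrightarrow> 0 \<le> g s" "\<And>s. s \<in> {0..L} \<Longrightarrow> \<theta> s = primitive g s"
    "constraint L g = (2 * \<alpha>, sin (2 * \<alpha>), 1 - cos (2 * \<alpha>))"
proof -
  have \<theta>: "\<theta> s = primitive g s" if "s \<in> {0..L}" for s
    using assms(1) that by (simp add: admissible_def H1_with_deriv_def primitive_def)
  then have "(LINT u:{0..L}|lborel. F (\<theta> u)) = (LINT u:{0..L}|lborel. F (primitive g u))" for F :: "real \<Rightarrow> real"
    by (intro set_lebesgue_integral_cong) auto
  with assms \<theta>[of L] show "constraint L g = (2 * \<alpha>, sin (2 * \<alpha>), 1 - cos (2 * \<alpha>))"
    by (auto simp: admissible_def constraint_def primitive_def)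
  show "sq_integrable L g" "AE s in lborel. s \<in> {0..L} \<longrightarrow> 0 \<le> g s"
    using assms(1) by (auto simp: admissible_def H1_with_deriv_def sq_integrable_def)
  show "\<And>s. s \<in> {0..L} \<Longrightarrow> \<theta> s = primitive g s" by (rule \<theta>)
qed

lemma constraint_imp_admissible:
  assumes "sq_integrable L f" "AE s in lborel. s \<in> {0..L} \<longrightarrow> 0 \<le> f s"
    and "constraint L f = (2 * \<alpha>, sin (2 * \<alpha>), 1 - cos (2 * \<alpha>))"
  shows "admissible \<alpha> L (primitive f) f"
  using assms sq_integrable_imp_set_integrable[OF assms(1)]
  by (auto simp: admissible_def H1_with_deriv_def sq_integrable_def constraint_def primitive_def[symmetric])

lemma is_minimizer_imp_fixed_length_minimizer:
  assumes "0 < \<alpha>" "is_minimizer \<alpha> L \<theta> g"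
  shows "fixed_length_minimizer L g" "\<And>s. s \<in> {0..L} \<Longrightarrow> \<theta> s = primitive g s"
proof -
  have L: "0 < L" and adm: "admissible \<alpha> L \<theta> g"
    and min: "\<And>\<theta>' g'. admissible \<alpha> L \<theta>' g' \<Longrightarrow> energy L g \<le> energy L g'"
    using assms(2) unfolding is_minimizer_def by auto
  note g = admissible_imp_constraint[OF adm less_imp_le[OF L]]
  show "\<And>s. s \<in> {0..L} \<Longrightarrow> \<theta> s = primitive g s" by (rule g(3))
  show "fixed_length_minimizer L g"
  proof
    show "0 < primitive g L" using g(4) assms(1) by (simp add: constraint_def primitive_def)
    fix f assume "sq_integrable L f" "AE s in lborel. s \<in> {0..L} \<longrightarrow> 0 \<le> f s" "constraint L f = constraint L g"
    with min[OF constraint_imp_admissible] g(4)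
    show "(LINT s:{0..L}|lborel. (g s)\<^sup>2) \<le> (LINT s:{0..L}|lborel. (f s)\<^sup>2)" by (simp add: energy_def)
  qed (use L g in auto)
qed

theorem theorem3p1:
  fixes \<alpha> L :: real and \<theta> g :: "real \<Rightarrow> real"
  assumes "0 < \<alpha>" and "\<alpha> \<le> pi / 2"
    and "is_minimizer \<alpha> L \<theta> g"
  defines "x \<equiv> (\<lambda>s. LINT u:{0..s}|lborel. cos (\<theta> u))"
    and "y \<equiv> (\<lambda>s. -1 + (LINT u:{0..s}|lborel. sin (\<theta> u)))"
  shows "(\<exists>h M. M-lipschitz_on {0..L} h \<and> (AE s in lborel. s \<in> {0..L} \<longrightarrow> g s = h s))
    \<and> (\<exists>lam1 lam2 C. \<forall>s\<in>{0..<L}.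
         (\<theta> has_real_derivative
            neg_part (C - lam1 * (y s + 1) - lam2 * x s)) (at s within {0..L}))"
proof -
  interpret fixed_length_minimizer L g
    by (rule is_minimizer_imp_fixed_length_minimizer[OF assms(1,3)])
  have \<theta>: "\<And>s. s \<in> {0..L} \<Longrightarrow> \<theta> s = primitive g s"
    by (rule is_minimizer_imp_fixed_length_minimizer[OF assms(1,3)])
  obtain c1 c2 c3 where el: "AE s in lborel. s \<in> {0..L} \<longrightarrow> g s = max (lagrange_fun c1 c2 c3 s) 0"
    using exists_lagrange_multipliers by blast
  define X where "X = primitive (\<lambda>u. cos (primitive g u))"
  define Y where "Y = primitive (\<lambda>u. sin (primitive g u))"
  have "x s = X s" "y s + 1 = Y s" if "s \<in> {0..L}" for s
    unfolding x_def y_def X_def Y_def primitive_def[of "\<lambda>u. cos (primitive g u)"]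
      primitive_def[of "\<lambda>u. sin (primitive g u)"]
    using that \<theta> by (auto intro!: set_lebesgue_integral_cong)
  then have eq: "max (lagrange_fun c1 c2 c3 s) 0 = neg_part ((c2 * Y L - c3 * X L - c1) - c2 * (y s + 1) - (- c3) * x s)"
    if "s \<in> {0..L}" for s
    using lagrange_fun_eq_primitives[OF that, of c1 c2 c3] that
    by (simp add: X_def Y_def neg_part_def algebra_simps)
  have deriv: "(\<theta> has_real_derivative max (lagrange_fun c1 c2 c3 s) 0) (at s within {0..L})" if "s \<in> {0..L}" for s
    using has_real_derivative_primitive_g[OF el that]
    by (rule has_field_derivative_transform_within[where d=1]) (use \<theta> that in auto)
  have "\<forall>s\<in>{0..<L}. (\<theta> has_real_derivative
      neg_part ((c2 * Y L - c3 * X L - c1) - c2 * (y s + 1) - (- c3) * x s)) (at s within {0..L})"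
    using deriv eq by (metis atLeastAtMost_iff atLeastLessThan_iff less_imp_le)
  then show ?thesis using lipschitz_positive_part_lagrange_fun el by blast
qed

end
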